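(* Let $C$ be an essentially finite decomposition, isomorphism filling category and $R$ a commutative $\mathbb{Q}$-algebra. An element $\alpha$ of the convolution algebra $([\overline{C}_1,R],\star)$ is invertible if and only if $\alpha(\overline{1}_x)$ is a unit of $R$ for every object $x$. In particular the map $\xi$ constantly equal to $1$ is invertible; its inverse $\mu$ satisfies $\mu(\overline{f})=1$ if $f$ is an isomorphism and, if $f$ is not an isomorphism, $$\mu(\overline{f})=\sum_{n\ge1}(-1)^n\big|\overline{\mathrm{PD}}_n\overline{f}\big|.$$
   Context: Two morphisms $f:x\to y$, $g:z\to w$ are isomorphic if there are isomorphisms $\alpha,\beta$ with $g\alpha=\beta f$; $\overline{f}$ is the class, $\overline{C}_1$ the set of classes. An $n$-decomposition of $\overline{f}$ is a tuple $(f_1,\dots,f_n)$ of composable morphisms with $f_n\cdots f_1=\beta^{-1}f\alpha$ for isomorphisms $\alpha,\beta$; isomorphisms of decompositions are families of isomorphisms between the intermediate objects making all squares commute; $\overline{\mathrm{D}}_n\overline{f}$ is the set of isomorphism classes. For $n\ge2$, $\overline{\mathrm{PD}}_n\overline{f}$ is the set of classes of decompositions with no $f_i$ an isomorphism, and $\overline{\mathrm{PD}}_1\overline{f}=\overline{\mathrm{D}}_1\overline{f}$. $C$ is an essentially finite decomposition category if $\bigsqcup_n\overline{\mathrm{PD}}_n\overline{f}$ is finite for all $\overline f$. $C$ is isomorphism filling if for any commutative square $x\to y_1\to y$, $x\to y_2\to y$ with $y_1\cong y_2$ there is an isomorphism $y_1\to y_2$ making both triangles commute. The convolution product is $(\alpha\star\beta)(\overline{f})=\sum_{\overline{(f_1,f_2)}\in\overline{\mathrm{D}}_2\overline{f}}\alpha(\overline{f}_1)\beta(\overline{f}_2)$.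 *)

theory Defs
  imports Main
begin

text \<open>A (possibly large-homset, but set-carried) category: objects, morphisms,
  domain, codomain, identities, composition.  Comp g f means "g after f".\<close>

record ('o, 'm) cat =
  Ob   :: "'o set"
  Mor  :: "'m set"
  Dom  :: "'m \<Rightarrow> 'o"
  Cod  :: "'m \<Rightarrow> 'o"
  Idm  :: "'o \<Rightarrow> 'm"
  Comp :: "'m \<Rightarrow> 'm \<Rightarrow> 'm"

definition category :: "('o, 'm) cat \<Rightarrow> bool" where
  "category C \<longleftrightarrow>
     (\<forall>f\<in>Mor C. Dom C f \<in> Ob C \<and> Cod C f \<in> Ob C) \<and>
     (\<forall>x\<in>Ob C. Idm C x \<in> Mor C \<and> Dom C (Idm C x) = x \<and> Cod C (Idm C x) = x) \<and>
     (\<forall>f\<in>Mor C. \<forall>g\<in>Mor C. Cod C f = Dom C g \<longrightarrow>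
        Comp C g f \<in> Mor C \<and> Dom C (Comp C g f) = Dom C f \<and> Cod C (Comp C g f) = Cod C g) \<and>
     (\<forall>f\<in>Mor C. \<forall>g\<in>Mor C. \<forall>h\<in>Mor C. Cod C f = Dom C g \<longrightarrow> Cod C g = Dom C h \<longrightarrow>
        Comp C h (Comp C g f) = Comp C (Comp C h g) f) \<and>
     (\<forall>f\<in>Mor C. Comp C f (Idm C (Dom C f)) = f \<and> Comp C (Idm C (Cod C f)) f = f)"

definition iso :: "('o, 'm) cat \<Rightarrow> 'm \<Rightarrow> bool" where
  "iso C f \<longleftrightarrow> f \<in> Mor C \<and> (\<exists>g\<in>Mor C. Dom C g = Cod C f \<and> Cod C g = Dom C f \<and>
      Comp C g f = Idm C (Dom C f) \<and> Comp C f g = Idm C (Cod C f))"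

definition iso_obj :: "('o, 'm) cat \<Rightarrow> 'o \<Rightarrow> 'o \<Rightarrow> bool" where
  "iso_obj C x y \<longleftrightarrow> (\<exists>h. iso C h \<and> Dom C h = x \<and> Cod C h = y)"

definition mor_iso :: "('o, 'm) cat \<Rightarrow> 'm \<Rightarrow> 'm \<Rightarrow> bool" where
  "mor_iso C f g \<longleftrightarrow> f \<in> Mor C \<and> g \<in> Mor C \<and>
     (\<exists>a b. iso C a \<and> iso C b \<and> Dom C a = Dom C f \<and> Cod C a = Dom C g \<and>
            Dom C b = Cod C f \<and> Cod C b = Cod C g \<and> Comp C g a = Comp C b f)"

definition mclass :: "('o, 'm) cat \<Rightarrow> 'm \<Rightarrow> 'm set" where
  "mclass C f = {g. mor_iso C f g}"

definition Cbar1 :: "('o, 'm) cat \<Rightarrow> 'm set set" where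
  "Cbar1 C = mclass C ` Mor C"

text \<open>Decompositions are lists [f_1, ..., f_n] of composable morphisms
  (f_1 applied first).\<close>
definition composable :: "('o, 'm) cat \<Rightarrow> 'm list \<Rightarrow> bool" where
  "composable C ds \<longleftrightarrow> set ds \<subseteq> Mor C \<and>
     (\<forall>i. Suc i < length ds \<longrightarrow> Cod C (ds ! i) = Dom C (ds ! Suc i))"

fun comp_list :: "('o, 'm) cat \<Rightarrow> 'm list \<Rightarrow> 'm" where
  "comp_list C [] = undefined"
| "comp_list C (f # fs) = foldl (\<lambda>acc g. Comp C g acc) f fs"

definition dobj :: "('o, 'm) cat \<Rightarrow> 'm list \<Rightarrow> nat \<Rightarrow> 'o" where
  "dobj C ds i = (if i < length ds then Dom C (ds ! i) else Cod C (last ds))"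

definition dec_iso :: "('o, 'm) cat \<Rightarrow> 'm list \<Rightarrow> 'm list \<Rightarrow> bool" where
  "dec_iso C ds es \<longleftrightarrow> length ds = length es \<and> composable C ds \<and> composable C es \<and>
     (\<exists>\<phi> :: nat \<Rightarrow> 'm.
        (\<forall>i\<le>length ds. iso C (\<phi> i) \<and> Dom C (\<phi> i) = dobj C ds i \<and> Cod C (\<phi> i) = dobj C es i) \<and>
        (\<forall>i<length ds. Comp C (es ! i) (\<phi> i) = Comp C (\<phi> (Suc i)) (ds ! i)))"

definition dclass :: "('o, 'm) cat \<Rightarrow> 'm list \<Rightarrow> 'm list set" where
  "dclass C ds = {es. dec_iso C ds es}"

definition decomps :: "('o, 'm) cat \<Rightarrow> nat \<Rightarrow> 'm set \<Rightarrow> 'm list set" where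
  "decomps C n c = {ds. length ds = n \<and> composable C ds \<and> comp_list C ds \<in> c}"

definition Dbar :: "('o, 'm) cat \<Rightarrow> nat \<Rightarrow> 'm set \<Rightarrow> 'm list set set" where
  "Dbar C n c = dclass C ` decomps C n c"

definition PDbar :: "('o, 'm) cat \<Rightarrow> nat \<Rightarrow> 'm set \<Rightarrow> 'm list set set" where
  "PDbar C n c = (if n = 1 then Dbar C 1 c
                  else dclass C ` {ds \<in> decomps C n c. \<forall>i<n. \<not> iso C (ds ! i)})"

definition ess_finite_decomp :: "('o, 'm) cat \<Rightarrow> bool" where
  "ess_finite_decomp C \<longleftrightarrow> (\<forall>c\<in>Cbar1 C. finite (SIGMA n:{1..}. PDbar C n c))"

definition iso_filling :: "('o, 'm) cat \<Rightarrow> bool" where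
  "iso_filling C \<longleftrightarrow>
     (\<forall>a1 b1 a2 b2. a1 \<in> Mor C \<and> b1 \<in> Mor C \<and> a2 \<in> Mor C \<and> b2 \<in> Mor C \<and>
        Dom C a1 = Dom C a2 \<and> Cod C b1 = Cod C b2 \<and>
        Cod C a1 = Dom C b1 \<and> Cod C a2 = Dom C b2 \<and>
        Comp C b1 a1 = Comp C b2 a2 \<and> iso_obj C (Cod C a1) (Cod C a2) \<longrightarrow>
        (\<exists>h. iso C h \<and> Dom C h = Cod C a1 \<and> Cod C h = Cod C a2 \<and>
             Comp C h a1 = a2 \<and> Comp C b2 h = b1))"

text \<open>Convolution product on functions C1 -> R (only values on classes matter).\<close>
definition conv :: "('o, 'm) cat \<Rightarrow> ('m set \<Rightarrow> 'r::comm_ring_1) \<Rightarrow> ('m set \<Rightarrow> 'r) \<Rightarrow> 'm set \<Rightarrow> 'r" where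
  "conv C \<alpha> \<beta> c = (\<Sum>D\<in>Dbar C 2 c.
      (let ds = (SOME ds. ds \<in> D) in \<alpha> (mclass C (ds ! 0)) * \<beta> (mclass C (ds ! 1))))"

definition conv_identity :: "('o, 'm) cat \<Rightarrow> ('m set \<Rightarrow> 'r::comm_ring_1) \<Rightarrow> bool" where
  "conv_identity C e \<longleftrightarrow>
     (\<forall>\<alpha>. \<forall>c\<in>Cbar1 C. conv C e \<alpha> c = \<alpha> c \<and> conv C \<alpha> e c = \<alpha> c)"

definition conv_inverse :: "('o, 'm) cat \<Rightarrow> ('m set \<Rightarrow> 'r::comm_ring_1) \<Rightarrow> ('m set \<Rightarrow> 'r) \<Rightarrow> bool" where
  "conv_inverse C \<alpha> \<beta> \<longleftrightarrow> (\<exists>e. conv_identity C e \<and>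
     (\<forall>c\<in>Cbar1 C. conv C \<alpha> \<beta> c = e c \<and> conv C \<beta> \<alpha> c = e c))"

definition conv_invertible :: "('o, 'm) cat \<Rightarrow> ('m set \<Rightarrow> 'r::comm_ring_1) \<Rightarrow> bool" where
  "conv_invertible C \<alpha> \<longleftrightarrow> (\<exists>\<beta>. conv_inverse C \<alpha> \<beta>)"

text \<open>A commutative ring is (necessarily uniquely) a Q-algebra iff every positive
  integer is a unit.\<close>
definition rat_algebra :: "'r::comm_ring_1 itself \<Rightarrow> bool" where
  "rat_algebra _ \<longleftrightarrow> (\<forall>n::nat. n > 0 \<longrightarrow> (of_nat n :: 'r) dvd 1)"

end

theory Submission
  imports Defs
begin

text \<open>
  At the class of f the product (\<alpha> \<star> \<beta>)(f) is a sum over 2-decompositions. Exactly one class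
  of them, that of (1_x, f) for x the domain of f, has an invertible first factor, so
  (\<alpha> \<star> \<beta>)(f) = \<alpha>(1_x) \<beta>(f) + (a sum over 2-decompositions (f1, f2) with f1 not
    invertible). In an essentially finite decomposition category
  a composite is invertible only if its factors are (a non-invertible section f with retraction r
  would give proper decompositions (f, r, f, r, ...) of an identity of every length), so in each
  remaining term f2 has a strictly shorter longest proper decomposition than f. Hence, if all
  \<alpha>(1_x) are units, the equation \<alpha> \<star> \<beta> = \<delta> can be solved for \<beta>
    by recursion on that length.
  Associativity of \<star> rests on the bijection between (k+l)-decompositions and triples consisting of
  a 2-decomposition, a k-decomposition of its first and an l-decomposition of its second factor;
  isomorphism filling is what makes this map injective. Applying the construction twice and using
  associativity shows that right inverses are two-sided. For \<mu> = \<xi>\<inverse> the recursion reads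
  \<mu>(f) = - \<Sum> \<mu>(f2), and the same bijection counts proper decompositions, giving the
  alternating sum.
  The argument works over any commutative ring.
\<close>

definition unit_inv :: "'a::comm_ring_1 \<Rightarrow> 'a" where "unit_inv r = (SOME v. r * v = 1)"

lemma mult_unit_inv: "(r::'a::comm_ring_1) dvd 1 \<Longrightarrow> r * unit_inv r = 1"
  unfolding unit_inv_def by (rule someI_ex) (metis dvd_def)

text \<open>The representative of a class of decompositions that the definition of conv uses.\<close>
definition rep :: "'m list set \<Rightarrow> 'm list" where "rep D = (SOME ds. ds \<in> D)"

locale category_ctx =
  fixes C :: "('o, 'm) cat"
  assumes cat: "category C"
begin

lemma Dom_in_Ob: "f \<in> Mor C \<Longrightarrow> Dom C f \<in> Ob C" using cat unfolding category_def by blast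
lemma Cod_in_Ob: "f \<in> Mor C \<Longrightarrow> Cod C f \<in> Ob C" using cat unfolding category_def by blast
lemma Idm_in_Mor[simp]: "x \<in> Ob C \<Longrightarrow> Idm C x \<in> Mor C"
  using cat unfolding category_def by blast
lemma Dom_Idm[simp]: "x \<in> Ob C \<Longrightarrow> Dom C (Idm C x) = x"
  using cat unfolding category_def by blast
lemma Cod_Idm[simp]: "x \<in> Ob C \<Longrightarrow> Cod C (Idm C x) = x"
  using cat unfolding category_def by blast
lemma Comp_in_Mor[simp]: "f \<in> Mor C \<Longrightarrow> g \<in> Mor C \<Longrightarrow>
  Cod C f = Dom C g \<Longrightarrow> Comp C g f \<in> Mor C"
  using cat unfolding category_def by blast
lemma Dom_Comp[simp]: "f \<in> Mor C \<Longrightarrow> g \<in> Mor C \<Longrightarrow>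
  Cod C f = Dom C g \<Longrightarrow> Dom C (Comp C g f) = Dom C f"
  using cat unfolding category_def by blast
lemma Cod_Comp[simp]: "f \<in> Mor C \<Longrightarrow> g \<in> Mor C \<Longrightarrow>
  Cod C f = Dom C g \<Longrightarrow> Cod C (Comp C g f) = Cod C g"
  using cat unfolding category_def by blast
lemma Comp_assoc: "f \<in> Mor C \<Longrightarrow> g \<in> Mor C \<Longrightarrow>
  h \<in> Mor C \<Longrightarrow> Cod C f = Dom C g \<Longrightarrow> Cod C g = Dom C h \<Longrightarrow>
   Comp C h (Comp C g f) = Comp C (Comp C h g) f"
  using cat unfolding category_def by blast
lemma Comp_Idm_right[simp]: "f \<in> Mor C \<Longrightarrow> x = Dom C f \<Longrightarrow>
  Comp C f (Idm C x) = f"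
  using cat unfolding category_def by blast
lemma Comp_Idm_left[simp]: "f \<in> Mor C \<Longrightarrow> x = Cod C f \<Longrightarrow>
  Comp C (Idm C x) f = f"
  using cat unfolding category_def by blast

definition inv_mor :: "'m \<Rightarrow> 'm" where
  "inv_mor f = (SOME g. g \<in> Mor C \<and> Dom C g = Cod C f \<and> Cod C g = Dom C f \<and>
      Comp C g f = Idm C (Dom C f) \<and> Comp C f g = Idm C (Cod C f))"

lemma iso_mor[simp]: "iso C f \<Longrightarrow> f \<in> Mor C" unfolding iso_def by blast

lemma inv_mor_props[simp]: assumes "iso C f"
  shows "inv_mor f \<in> Mor C" "Dom C (inv_mor f) = Cod C f" "Cod C (inv_mor f) = Dom C f"
    "Comp C (inv_mor f) f = Idm C (Dom C f)" "Comp C f (inv_mor f) = Idm C (Cod C f)"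
proof -
  have "\<exists>g. g \<in> Mor C \<and> Dom C g = Cod C f \<and> Cod C g = Dom C f \<and>
      Comp C g f = Idm C (Dom C f) \<and> Comp C f g = Idm C (Cod C f)" using assms unfolding iso_def by blast
  from someI_ex[OF this] show "inv_mor f \<in> Mor C" "Dom C (inv_mor f) = Cod C f"
    "Cod C (inv_mor f) = Dom C f"
    "Comp C (inv_mor f) f = Idm C (Dom C f)" "Comp C f (inv_mor f) = Idm C (Cod C f)"
      unfolding inv_mor_def by blast+
qed

lemma iso_inv_mor: "iso C f \<Longrightarrow> iso C (inv_mor f)"
  unfolding iso_def[of C "inv_mor f"] using inv_mor_props[of f] iso_mor[of f] by auto

lemma iso_Idm: "x \<in> Ob C \<Longrightarrow> iso C (Idm C x)"
  unfolding iso_def by (rule conjI, simp, rule bexI[of _ "Idm C x"], auto)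

lemma iso_Comp: assumes "iso C f" "iso C g" "Cod C f = Dom C g" shows "iso C (Comp C g f)"
proof -
  have m: "f \<in> Mor C" "g \<in> Mor C" using assms iso_mor by auto
  note i = inv_mor_props[OF assms(1)] inv_mor_props[OF assms(2)]
  have "Comp C (Comp C (inv_mor f) (inv_mor g)) (Comp C g f) =
    Comp C (inv_mor f) (Comp C (inv_mor g) (Comp C g f))"
    using m i assms(3) Comp_assoc[of "Comp C g f" "inv_mor g" "inv_mor f"] by simp
  also have "\<dots> = Comp C (inv_mor f) (Comp C (Comp C (inv_mor g) g) f)"
    using m i assms(3) Comp_assoc[of f g "inv_mor g"] by simp
  also have "\<dots> = Idm C (Dom C f)" using m i assms(3) by (simp)
  finally have 1: "Comp C (Comp C (inv_mor f) (inv_mor g)) (Comp C g f) = Idm C (Dom C f)" .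
  have "Comp C (Comp C g f) (Comp C (inv_mor f) (inv_mor g)) =
    Comp C g (Comp C f (Comp C (inv_mor f) (inv_mor g)))"
    using m i assms(3) Comp_assoc[of "Comp C (inv_mor f) (inv_mor g)" f g] by simp
  also have "\<dots> = Comp C g (Comp C (Comp C f (inv_mor f)) (inv_mor g))"
    using m i assms(3) Comp_assoc[of "inv_mor g" "inv_mor f" f] by simp
  also have "\<dots> = Idm C (Cod C g)" using m i assms(3) by (simp)
  finally have 2: "Comp C (Comp C g f) (Comp C (inv_mor f) (inv_mor g)) = Idm C (Cod C g)" .
  show ?thesis unfolding iso_def using m i assms(3) 1 2
    by (intro conjI bexI[of _ "Comp C (inv_mor f) (inv_mor g)"]) auto
qed

lemma Comp_inv_transpose: assumes "iso C a" "iso C b" "f \<in> Mor C" "g \<in> Mor C"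
  "Dom C a = Dom C f" "Cod C a = Dom C g" "Dom C b = Cod C f" "Cod C b = Cod C g"
  "Comp C g a = Comp C b f"
shows "Comp C f (inv_mor a) = Comp C (inv_mor b) g"
proof -
  have "Comp C (inv_mor b) g = Comp C (inv_mor b) (Comp C g (Comp C a (inv_mor a)))" using assms by simp
  also have "\<dots> = Comp C (inv_mor b) (Comp C (Comp C g a) (inv_mor a))"
    using assms Comp_assoc[of "inv_mor a" a g] by simp
  also have "\<dots> = Comp C (inv_mor b) (Comp C b (Comp C f (inv_mor a)))"
    using assms Comp_assoc[of "inv_mor a" f b] by simp
  also have "\<dots> = Comp C (Comp C (inv_mor b) b) (Comp C f (inv_mor a))"
    using assms Comp_assoc[of "Comp C f (inv_mor a)" b "inv_mor b"] by simp
  also have "\<dots> = Comp C f (inv_mor a)" using assms by simp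
  finally show ?thesis by simp
qed

lemma iso_left_factor: assumes "iso C f" "g \<in> Mor C" "Cod C f = Dom C g" "iso C (Comp C g f)"
  shows "iso C g"
proof -
  have eq: "Comp C (Comp C g f) (inv_mor f) = g"
  proof -
    have "Comp C (Comp C g f) (inv_mor f) = Comp C g (Comp C f (inv_mor f))"
      using assms Comp_assoc[of "inv_mor f" f g] by simp
    also have "\<dots> = g" using assms by simp
    finally show ?thesis by simp
  qed
  have "iso C (Comp C (Comp C g f) (inv_mor f))" by (rule iso_Comp) (use assms iso_inv_mor in auto)
  then show ?thesis using eq by simp
qed

lemma iso_right_factor: assumes "iso C g" "f \<in> Mor C" "Cod C f = Dom C g" "iso C (Comp C g f)"
  shows "iso C f"
proof -
  have eq: "Comp C (inv_mor g) (Comp C g f) = f"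
  proof -
    have "Comp C (inv_mor g) (Comp C g f) = Comp C (Comp C (inv_mor g) g) f"
      using assms Comp_assoc[of f g "inv_mor g"] by simp
    also have "\<dots> = f" using assms by simp
    finally show ?thesis by simp
  qed
  have "iso C (Comp C (inv_mor g) (Comp C g f))" by (rule iso_Comp) (use assms iso_inv_mor in auto)
  then show ?thesis using eq by simp
qed

lemma mor_isoI: "f \<in> Mor C \<Longrightarrow> g \<in> Mor C \<Longrightarrow> iso C a \<Longrightarrow>
  iso C b \<Longrightarrow> Dom C a = Dom C f \<Longrightarrow>
  Cod C a = Dom C g \<Longrightarrow> Dom C b = Cod C f \<Longrightarrow> Cod C b = Cod C g \<Longrightarrow>
    Comp C g a = Comp C b f \<Longrightarrow> mor_iso C f g"
  unfolding mor_iso_def by blast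

lemma mor_iso_refl: "f \<in> Mor C \<Longrightarrow> mor_iso C f f"
  unfolding mor_iso_def
  by (rule conjI, simp, rule conjI, simp, rule exI[of _ "Idm C (Dom C f)"], rule exI[of _ "Idm C (Cod C f)"])
     (simp add: iso_Idm Dom_in_Ob Cod_in_Ob)

lemma mor_iso_sym: assumes "mor_iso C f g" shows "mor_iso C g f"
proof -
  obtain a b where A: "f \<in> Mor C" "g \<in> Mor C" "iso C a" "iso C b"
      "Dom C a = Dom C f" "Cod C a = Dom C g" "Dom C b = Cod C f" "Cod C b = Cod C g" "Comp C g a = Comp C b f"
    using assms(1) unfolding mor_iso_def by blast
  show ?thesis
    apply (rule mor_isoI[where a="inv_mor a" and b="inv_mor b"])
    using A Comp_inv_transpose[of a b f g] iso_inv_mor by auto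
qed

lemma mor_iso_trans: assumes "mor_iso C f g" "mor_iso C g h" shows "mor_iso C f h"
proof -
  obtain a b where A: "f \<in> Mor C" "g \<in> Mor C" "iso C a" "iso C b"
      "Dom C a = Dom C f" "Cod C a = Dom C g" "Dom C b = Cod C f" "Cod C b = Cod C g" "Comp C g a = Comp C b f"
    using assms(1) unfolding mor_iso_def by blast
  obtain a' b' where B: "h \<in> Mor C" "iso C a'" "iso C b'"
      "Dom C a' = Dom C g" "Cod C a' = Dom C h" "Dom C b' = Cod C g" "Cod C b' = Cod C h"
        "Comp C h a' = Comp C b' g"
    using assms(2) unfolding mor_iso_def by blast
  have "Comp C h (Comp C a' a) = Comp C (Comp C h a') a" using A B Comp_assoc[of a a' h] by simp
  also have "\<dots> = Comp C (Comp C b' g) a" using B by simp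
  also have "\<dots> = Comp C b' (Comp C g a)" using A B Comp_assoc[of a g b'] by simp
  also have "\<dots> = Comp C b' (Comp C b f)" using A by simp
  also have "\<dots> = Comp C (Comp C b' b) f" using A B Comp_assoc[of f b b'] by simp
  finally have E: "Comp C h (Comp C a' a) = Comp C (Comp C b' b) f" .
  show ?thesis
    apply (rule mor_isoI[where a="Comp C a' a" and b="Comp C b' b"])
    using A B E iso_Comp by auto
qed

lemma mor_iso_iso: assumes "mor_iso C f g" "iso C f" shows "iso C g"
proof -
  obtain a b where A: "f \<in> Mor C" "g \<in> Mor C" "iso C a" "iso C b"
      "Dom C a = Dom C f" "Cod C a = Dom C g" "Dom C b = Cod C f" "Cod C b = Cod C g" "Comp C g a = Comp C b f"
    using assms unfolding mor_iso_def by blast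
  have "iso C (Comp C g a)" using A iso_Comp assms(2) by simp
  then show ?thesis using iso_left_factor[of a g] A by simp
qed

lemma mor_iso_iso_iff: "mor_iso C f g \<Longrightarrow> iso C f \<longleftrightarrow> iso C g"
  using mor_iso_iso mor_iso_sym by blast

lemma mclass_eqI: assumes "mor_iso C f g" shows "mclass C f = mclass C g"
proof -
  have "mor_iso C f h \<longleftrightarrow> mor_iso C g h" for h
    using assms mor_iso_sym[OF assms] mor_iso_trans[of f g h] mor_iso_trans[of g f h] by blast
  then show ?thesis unfolding mclass_def by blast
qed

lemma mclass_eq_iff: assumes "f \<in> Mor C" shows "mclass C f = mclass C g \<longleftrightarrow> mor_iso C f g"
proof
  assume "mclass C f = mclass C g"
  moreover have "f \<in> mclass C f" using mor_iso_refl[OF assms] unfolding mclass_def by simp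
  ultimately have "mor_iso C g f" unfolding mclass_def by simp
  then show "mor_iso C f g" by (rule mor_iso_sym)
qed (rule mclass_eqI)

lemma mem_mclass_iff: "g \<in> mclass C f \<longleftrightarrow> mor_iso C f g" unfolding mclass_def by simp

lemma mor_iso_Idm_Dom: "iso C f \<Longrightarrow> mor_iso C (Idm C (Dom C f)) f"
  unfolding mor_iso_def
  by (rule conjI, simp add: Dom_in_Ob, rule conjI, simp, rule exI[of _ "Idm C (Dom C f)"], rule exI[of _ "f"])
     (simp add: iso_Idm Dom_in_Ob Cod_in_Ob)

lemma iso_obj_Dom: "mor_iso C f g \<Longrightarrow> iso_obj C (Dom C f) (Dom C g)"
  unfolding mor_iso_def iso_obj_def by blast
lemma mclass_Idm_eq: "iso_obj C x y \<Longrightarrow> mclass C (Idm C x) = mclass C (Idm C y)"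
proof -
  assume "iso_obj C x y"
  then obtain h where h: "iso C h" "Dom C h = x" "Cod C h = y" unfolding iso_obj_def by blast
  then have "mor_iso C (Idm C x) h" using mor_iso_Idm_Dom by blast
  moreover have "mor_iso C h (Idm C y)"
    apply (rule mor_isoI[where a="h" and b="Idm C y"])
    using h by (auto simp add: iso_Idm Dom_in_Ob Cod_in_Ob iso_inv_mor)
  ultimately show ?thesis using mclass_eqI mor_iso_trans by blast
qed

abbreviation composite where "composite \<equiv> comp_list C"

lemma composable_Nil[simp]: "composable C []" unfolding composable_def by simp

lemma composable_Cons: "composable C (x # xs) \<longleftrightarrow> x \<in> Mor C \<and> composable C xs \<and>
  (xs \<noteq> [] \<longrightarrow> Cod C x = Dom C (hd xs))"
proof
  assume a: "composable C (x # xs)"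
  then have "x \<in> Mor C" "set xs \<subseteq> Mor C" unfolding composable_def by auto
  moreover have "\<forall>i. Suc i < length xs \<longrightarrow> Cod C (xs ! i) = Dom C (xs ! Suc i)"
  proof (intro allI impI)
    fix i assume "Suc i < length xs"
    then have "Suc (Suc i) < length (x#xs)" by simp
    then show "Cod C (xs ! i) = Dom C (xs ! Suc i)" using a unfolding composable_def by force
  qed
  moreover have "xs \<noteq> [] \<longrightarrow> Cod C x = Dom C (hd xs)"
  proof
    assume "xs \<noteq> []" then have "Suc 0 < length (x#xs)" by simp
    then have "Cod C ((x#xs) ! 0) = Dom C ((x#xs) ! Suc 0)" using a unfolding composable_def by blast
    then show "Cod C x = Dom C (hd xs)" using \<open>xs \<noteq> []\<close> by (simp add: hd_conv_nth)
  qed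
  ultimately show "x \<in> Mor C \<and> composable C xs \<and>
    (xs \<noteq> [] \<longrightarrow> Cod C x = Dom C (hd xs))"
    unfolding composable_def by blast
next
  assume a: "x \<in> Mor C \<and> composable C xs \<and>
    (xs \<noteq> [] \<longrightarrow> Cod C x = Dom C (hd xs))"
  show "composable C (x # xs)" unfolding composable_def
  proof (intro conjI allI impI)
    show "set (x # xs) \<subseteq> Mor C" using a unfolding composable_def by auto
    fix i assume i: "Suc i < length (x # xs)"
    show "Cod C ((x # xs) ! i) = Dom C ((x # xs) ! Suc i)"
    proof (cases i)
      case 0 then show ?thesis using a i by (cases xs) auto
    next
      case (Suc j) then show ?thesis using a i unfolding composable_def by auto
    qed
  qed
qed

lemma composable_single[simp]: "composable C [x] \<longleftrightarrow> x \<in> Mor C"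
  by (simp add: composable_Cons)

lemma composable_append: "composable C (xs @ ys) \<longleftrightarrow> composable C xs \<and>
  composable C ys \<and>
   (xs \<noteq> [] \<longrightarrow> ys \<noteq> [] \<longrightarrow> Cod C (last xs) = Dom C (hd ys))"
  by (induction xs) (auto simp: composable_Cons)

lemma composable_mor: "composable C xs \<Longrightarrow> i < length xs \<Longrightarrow> xs ! i \<in> Mor C"
  unfolding composable_def by auto

lemma composable_link: "composable C xs \<Longrightarrow> Suc i < length xs \<Longrightarrow>
  Cod C (xs ! i) = Dom C (xs ! Suc i)"
  unfolding composable_def by auto

lemma composite_snoc: "xs \<noteq> [] \<Longrightarrow> composite (xs @ [y]) = Comp C y (composite xs)"
  by (cases xs) auto

lemma composite_props: "composable C xs \<Longrightarrow> xs \<noteq> [] \<Longrightarrow>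
   composite xs \<in> Mor C \<and> Dom C (composite xs) = Dom C (hd xs) \<and> Cod C (composite xs) = Cod C
     (last xs)"
proof (induction xs rule: rev_induct)
  case Nil then show ?case by simp
next
  case (snoc y xs)
  show ?case
  proof (cases "xs = []")
    case True then show ?thesis using snoc by simp
  next
    case False
    then have c: "composable C xs" "y \<in> Mor C" "Cod C (last xs) = Dom C y"
      using snoc(2) by (auto simp: composable_append)
    then show ?thesis using snoc(1) False by (simp add: composite_snoc)
  qed
qed

lemma composite_mor[simp]: "composable C xs \<Longrightarrow> xs \<noteq> [] \<Longrightarrow>
  composite xs \<in> Mor C" using composite_props by blast
lemma composite_dom[simp]: "composable C xs \<Longrightarrow> xs \<noteq> [] \<Longrightarrow>
  Dom C (composite xs) = Dom C (hd xs)" using composite_props by blast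
lemma composite_cod[simp]: "composable C xs \<Longrightarrow> xs \<noteq> [] \<Longrightarrow>
  Cod C (composite xs) = Cod C (last xs)" using composite_props by blast

lemma composite_append: "composable C (xs @ ys) \<Longrightarrow> xs \<noteq> [] \<Longrightarrow>
  ys \<noteq> [] \<Longrightarrow> composite (xs @ ys) = Comp C (composite ys) (composite xs)"
proof (induction ys rule: rev_induct)
  case Nil then show ?case by simp
next
  case (snoc y ys)
  show ?case
  proof (cases "ys = []")
    case True then show ?thesis using snoc by (simp add: composite_snoc)
  next
    case False
    have c: "composable C (xs @ ys)" "composable C xs" "composable C ys" "y \<in> Mor C"
      "Cod C (last ys) = Dom C y"
      "Cod C (last xs) = Dom C (hd ys)"
      using snoc(2) False snoc(3) by (auto simp: composable_append)
    have "composite (xs @ ys @ [y]) = Comp C y (composite (xs @ ys))"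
      using composite_snoc[of "xs @ ys" y] snoc(3) by simp
    also have "\<dots> = Comp C y (Comp C (composite ys) (composite xs))"
      using snoc(1)[OF c(1) snoc(3) False] by simp
    also have "\<dots> = Comp C (Comp C y (composite ys)) (composite xs)"
      using Comp_assoc[of "composite xs" "composite ys" y] c False snoc(3) by simp
    also have "\<dots> = Comp C (composite (ys @ [y])) (composite xs)" using composite_snoc[OF False] by simp
    finally show ?thesis by simp
  qed
qed

lemma composite_Cons: "composable C (x # xs) \<Longrightarrow> xs \<noteq> [] \<Longrightarrow>
  composite (x # xs) = Comp C (composite xs) x"
  using composite_append[of "[x]" xs] by simp

lemma dobj_lt: "i < length ds \<Longrightarrow> dobj C ds i = Dom C (ds ! i)" unfolding dobj_def by simp
lemma dobj_len: "dobj C ds (length ds) = Cod C (last ds)" unfolding dobj_def by simp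
lemma dobj_Suc: assumes "composable C ds" "i < length ds" shows "dobj C ds (Suc i) = Cod C (ds ! i)"
proof (cases "Suc i < length ds")
  case True then show ?thesis unfolding dobj_def using composable_link[OF assms(1) True] by simp
next
  case False
  then have "i = length ds - 1" "ds \<noteq> []" using assms by auto
  then show ?thesis unfolding dobj_def using False assms by (simp add: last_conv_nth)
qed
lemma dobj_0: "ds \<noteq> [] \<Longrightarrow> dobj C ds 0 = Dom C (hd ds)"
  unfolding dobj_def by (simp add: hd_conv_nth)
lemma dobj_ob: "composable C ds \<Longrightarrow> ds \<noteq> [] \<Longrightarrow>
  i \<le> length ds \<Longrightarrow> dobj C ds i \<in> Ob C"
  unfolding dobj_def using composable_mor[of ds] Dom_in_Ob Cod_in_Ob by (auto simp: last_conv_nth)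

lemma dobj_append1: "composable C (xs @ ys) \<Longrightarrow> ys \<noteq> [] \<Longrightarrow>
  i \<le> length xs \<Longrightarrow> xs \<noteq> [] \<Longrightarrow>
   dobj C (xs @ ys) i = dobj C xs i"
  unfolding dobj_def by (auto simp: nth_append composable_append hd_conv_nth)

lemma dobj_append2: "ys \<noteq> [] \<Longrightarrow> dobj C (xs @ ys) (length xs + i) = dobj C ys i"
  unfolding dobj_def by (auto simp: nth_append)

definition ladder :: "'m list \<Rightarrow> 'm list \<Rightarrow> (nat \<Rightarrow> 'm) \<Rightarrow> bool"
  where
  "ladder ds es \<phi> \<longleftrightarrow> (\<forall>i\<le>length ds. iso C (\<phi> i) \<and>
    Dom C (\<phi> i) = dobj C ds i \<and> Cod C (\<phi> i) = dobj C es i) \<and>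
        (\<forall>i<length ds. Comp C (es ! i) (\<phi> i) = Comp C (\<phi> (Suc i)) (ds ! i))"

lemma dec_iso_ladder: "dec_iso C ds es \<longleftrightarrow> length ds = length es \<and> composable C ds \<and>
  composable C es \<and> (\<exists>\<phi>. ladder ds es \<phi>)"
  unfolding dec_iso_def ladder_def by simp

lemma ladder_refl: assumes "composable C ds" "ds \<noteq> []"
  shows "ladder ds ds (\<lambda>i. Idm C (dobj C ds i))"
  unfolding ladder_def
proof (intro conjI allI impI)
  fix i assume "i \<le> length ds"
  then show "iso C (Idm C (dobj C ds i))" "Dom C (Idm C (dobj C ds i)) = dobj C ds i"
       "Cod C (Idm C (dobj C ds i)) = dobj C ds i" using dobj_ob[OF assms] iso_Idm by auto
next
  fix i assume i: "i < length ds"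
  have m: "ds ! i \<in> Mor C" using composable_mor assms i by blast
  show "Comp C (ds ! i) (Idm C (dobj C ds i)) = Comp C (Idm C (dobj C ds (Suc i))) (ds ! i)"
    using m i dobj_lt dobj_Suc assms by simp
qed

lemma ladder_typing: assumes "ladder ds es \<phi>" "composable C ds" "composable C es" "length ds = length es"
  "i < length ds"
  shows "iso C (\<phi> i)" "iso C (\<phi> (Suc i))" "Dom C (\<phi> i) = Dom C (ds ! i)"
    "Cod C (\<phi> i) = Dom C (es ! i)"
    "Dom C (\<phi> (Suc i)) = Cod C (ds ! i)" "Cod C (\<phi> (Suc i)) = Cod C (es ! i)"
    "ds ! i \<in> Mor C" "es ! i \<in> Mor C" "Comp C (es ! i) (\<phi> i) = Comp C (\<phi> (Suc i)) (ds ! i)"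
  using assms unfolding ladder_def
  by (auto simp: dobj_lt dobj_Suc composable_mor)

lemma ladder_sym: assumes "ladder ds es \<phi>" "composable C ds" "composable C es" "length ds = length es"
  shows "ladder es ds (\<lambda>i. inv_mor (\<phi> i))"
  unfolding ladder_def
proof (intro conjI allI impI)
  fix i assume "i \<le> length es"
  then show "iso C (inv_mor (\<phi> i))" "Dom C (inv_mor (\<phi> i)) = dobj C es i"
    "Cod C (inv_mor (\<phi> i)) = dobj C ds i"
    using assms iso_inv_mor unfolding ladder_def by auto
next
  fix i assume i: "i < length es"
  note t = ladder_typing[OF assms, of i]
  show "Comp C (ds ! i) (inv_mor (\<phi> i)) = Comp C (inv_mor (\<phi> (Suc i))) (es ! i)"
    using Comp_inv_transpose[of "\<phi> i" "\<phi> (Suc i)" "ds ! i" "es ! i"] t i assms(4) by simp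
qed

lemma ladder_trans: assumes "ladder ds es \<phi>" "ladder es fs \<psi>" "composable C ds" "composable C es"
  "composable C fs"
  "length ds = length es" "length es = length fs"
  shows "ladder ds fs (\<lambda>i. Comp C (\<psi> i) (\<phi> i))"
  unfolding ladder_def
proof (intro conjI allI impI)
  fix i assume "i \<le> length ds"
  then show "iso C (Comp C (\<psi> i) (\<phi> i))" "Dom C (Comp C (\<psi> i) (\<phi> i)) = dobj C ds i"
    "Cod C (Comp C (\<psi> i) (\<phi> i)) = dobj C fs i"
    using assms iso_Comp unfolding ladder_def by auto
next
  fix i assume i: "i < length ds"
  note t = ladder_typing[OF assms(1,3,4,6) i]
  note u = ladder_typing[OF assms(2,4,5,7), of i]
  have "Comp C (fs ! i) (Comp C (\<psi> i) (\<phi> i)) = Comp C (Comp C (fs ! i) (\<psi> i)) (\<phi> i)"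
    using t u i assms Comp_assoc[of "\<phi> i" "\<psi> i" "fs ! i"] by simp
  also have "\<dots> = Comp C (Comp C (\<psi> (Suc i)) (es ! i)) (\<phi> i)" using u i assms by simp
  also have "\<dots> = Comp C (\<psi> (Suc i)) (Comp C (es ! i) (\<phi> i))"
    using t u i assms Comp_assoc[of "\<phi> i" "es ! i" "\<psi> (Suc i)"] by simp
  also have "\<dots> = Comp C (\<psi> (Suc i)) (Comp C (\<phi> (Suc i)) (ds ! i))" using t by simp
  also have "\<dots> = Comp C (Comp C (\<psi> (Suc i)) (\<phi> (Suc i))) (ds ! i)"
    using t u i assms Comp_assoc[of "ds ! i" "\<phi> (Suc i)" "\<psi> (Suc i)"] by simp
  finally show "Comp C (fs ! i) (Comp C (\<psi> i) (\<phi> i)) =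
    Comp C (Comp C (\<psi> (Suc i)) (\<phi> (Suc i))) (ds ! i)" .
qed

lemma dec_iso_refl: "composable C ds \<Longrightarrow> ds \<noteq> [] \<Longrightarrow> dec_iso C ds ds"
  unfolding dec_iso_ladder using ladder_refl by blast
lemma dec_iso_sym: assumes "dec_iso C ds es" shows "dec_iso C es ds"
proof -
  obtain \<phi> where "ladder ds es \<phi>" "length ds = length es" "composable C ds" "composable C es"
    using assms unfolding dec_iso_ladder by blast
  then show ?thesis unfolding dec_iso_ladder using ladder_sym[of ds es \<phi>] by auto
qed
lemma dec_iso_trans: assumes "dec_iso C ds es" "dec_iso C es fs" shows "dec_iso C ds fs"
proof -
  obtain \<phi> where "ladder ds es \<phi>" "length ds = length es" "composable C ds" "composable C es"
    using assms unfolding dec_iso_ladder by blast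
  moreover obtain \<psi> where "ladder es fs \<psi>" "length es = length fs" "composable C fs"
    using assms unfolding dec_iso_ladder by blast
  ultimately show ?thesis unfolding dec_iso_ladder using ladder_trans[of ds es \<phi> fs \<psi>] by auto
qed

lemma ladder_dobjI: "(\<And>i. i \<le> length ds \<Longrightarrow>
  iso C (\<phi> i) \<and> Dom C (\<phi> i) = dobj C ds i \<and> Cod C (\<phi> i) = dobj C es i)
    \<Longrightarrow>
  (\<And>i. i < length ds \<Longrightarrow> Comp C (es ! i) (\<phi> i) = Comp C (\<phi> (Suc i)) (ds ! i))
    \<Longrightarrow> ladder ds es \<phi>"
  unfolding ladder_def by blast

lemma ladderI: assumes "composable C ds" "composable C es" "length ds = length es" "ds \<noteq> []"
  "\<And>i. i < length ds \<Longrightarrow>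
    iso C (\<phi> i) \<and> iso C (\<phi> (Suc i)) \<and> Dom C (\<phi> i) = Dom C (ds ! i) \<and> Cod C (\<phi>
      i) = Dom C (es ! i) \<and>
      Dom C (\<phi> (Suc i)) = Cod C (ds ! i) \<and> Cod C (\<phi> (Suc i)) = Cod C (es ! i) \<and>
      Comp C (es ! i) (\<phi> i) = Comp C (\<phi> (Suc i)) (ds ! i)"
  shows "ladder ds es \<phi>"
proof (rule ladder_dobjI)
  fix i assume i: "i \<le> length ds"
  show "iso C (\<phi> i) \<and> Dom C (\<phi> i) = dobj C ds i \<and> Cod C (\<phi> i) = dobj C es i"
  proof (cases "i < length ds")
    case True then show ?thesis using assms(5)[OF True] dobj_lt assms(3) by simp
  next
    case False
    then obtain j where j: "i = Suc j" "j < length ds" using i assms(4) by (cases i) auto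
    then show ?thesis using assms(5)[OF j(2)] dobj_Suc assms by simp
  qed
next
  fix i assume "i < length ds" then show "Comp C (es ! i) (\<phi> i) = Comp C (\<phi> (Suc i)) (ds ! i)"
    using assms(5) by blast
qed

lemma ladder_ends: assumes "ladder ds es \<phi>" "composable C ds" "composable C es" "length ds = length es"
  "ds \<noteq> []"
  shows "iso C (\<phi> 0)" "Dom C (\<phi> 0) = Dom C (hd ds)" "Cod C (\<phi> 0) = Dom C (hd es)"
    "iso C (\<phi> (length ds))" "Dom C (\<phi> (length ds)) = Cod C (last ds)"
      "Cod C (\<phi> (length ds)) = Cod C (last es)"
proof -
  have ne: "es \<noteq> []" using assms by auto
  have a: "iso C (\<phi> 0) \<and> Dom C (\<phi> 0) = dobj C ds 0 \<and> Cod C (\<phi> 0) = dobj C es 0"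
    using assms(1) unfolding ladder_def by blast
  have b: "iso C (\<phi> (length ds)) \<and> Dom C (\<phi> (length ds)) = dobj C ds (length ds) \<and>
    Cod C (\<phi> (length ds)) = dobj C es (length ds)"
    using assms(1) unfolding ladder_def by blast
  have c: "dobj C es (length ds) = Cod C (last es)" using assms(4) dobj_len[of es] by simp
  show "iso C (\<phi> 0)" "Dom C (\<phi> 0) = Dom C (hd ds)" "Cod C (\<phi> 0) = Dom C (hd es)"
    "iso C (\<phi> (length ds))" "Dom C (\<phi> (length ds)) = Cod C (last ds)"
      "Cod C (\<phi> (length ds)) = Cod C (last es)"
    using a b c dobj_0[OF ne] dobj_0[OF assms(5)] dobj_len[of ds] by auto
qed

lemma ladder_split: assumes "ladder (xs @ ys) (xs' @ ys') \<phi>" "length xs = length xs'"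
  "length ys = length ys'"
  "composable C (xs @ ys)" "composable C (xs' @ ys')" "xs \<noteq> []" "ys \<noteq> []"
  shows "ladder xs xs' \<phi>" "ladder ys ys' (\<lambda>i. \<phi> (length xs + i))"
proof -
  have ne: "xs' \<noteq> []" "ys' \<noteq> []" using assms by auto
  show "ladder xs xs' \<phi>"
  proof (rule ladder_dobjI)
    fix i assume i: "i \<le> length xs"
    then show "iso C (\<phi> i) \<and> Dom C (\<phi> i) = dobj C xs i \<and> Cod C (\<phi> i) = dobj C xs' i"
      using assms(1) dobj_append1[OF assms(4,7) i assms(6)] dobj_append1[OF assms(5) ne(2) _ ne(1), of i]
        assms(2)
      unfolding ladder_def by auto
  next
    fix i assume i: "i < length xs"
    have "Comp C ((xs' @ ys') ! i) (\<phi> i) = Comp C (\<phi> (Suc i)) ((xs @ ys) ! i)"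
      using assms(1) i unfolding ladder_def by auto
    then show "Comp C (xs' ! i) (\<phi> i) = Comp C (\<phi> (Suc i)) (xs ! i)"
      using i assms(2) by (simp add: nth_append)
  qed
  show "ladder ys ys' (\<lambda>i. \<phi> (length xs + i))"
  proof (rule ladder_dobjI)
    fix i assume i: "i \<le> length ys"
    then show "iso C (\<phi> (length xs + i)) \<and> Dom C (\<phi> (length xs + i)) = dobj C ys i \<and>
      Cod C (\<phi> (length xs + i)) = dobj C ys' i"
      using assms(1) dobj_append2[OF assms(7), of xs i] dobj_append2[OF ne(2), of xs' i] assms(2)
      unfolding ladder_def by auto
  next
    fix i assume i: "i < length ys"
    have "Comp C ((xs' @ ys') ! (length xs + i)) (\<phi> (length xs + i)) =
      Comp C (\<phi> (Suc (length xs + i))) ((xs @ ys) ! (length xs + i))"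
      using assms(1) i unfolding ladder_def by auto
    then show "Comp C (ys' ! i) (\<phi> (length xs + i)) = Comp C (\<phi> (length xs + Suc i)) (ys ! i)"
      using assms(2) by (simp add: nth_append)
  qed
qed

lemma ladder_glue: assumes "ladder xs xs' \<phi>" "ladder ys ys' \<psi>" "\<phi> (length xs) = \<psi> 0"
  "length xs = length xs'" "length ys = length ys'"
  "composable C (xs @ ys)" "composable C (xs' @ ys')" "xs \<noteq> []" "ys \<noteq> []"
  shows "ladder (xs @ ys) (xs' @ ys') (\<lambda>i. if i \<le> length xs then \<phi> i else \<psi> (i - length xs))"
  (is "ladder _ _ ?f")
proof -
  have ne: "xs' \<noteq> []" "ys' \<noteq> []" using assms by auto
  have f2: "?f i = \<psi> (i - length xs)" if "length xs \<le> i" for i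
    using that assms(3) by (cases "i = length xs") auto
  show ?thesis
  proof (rule ladder_dobjI)
    fix i assume i: "i \<le> length (xs @ ys)"
    show "iso C (?f i) \<and> Dom C (?f i) = dobj C (xs @ ys) i \<and> Cod C (?f i) = dobj C (xs' @ ys') i"
    proof (cases "i \<le> length xs")
      case True
      then show ?thesis
        using assms(1) dobj_append1[OF assms(6,9) True assms(8)] dobj_append1[OF assms(7) ne(2) _ ne(1), of i]
          assms(4)
        unfolding ladder_def by auto
    next
      case False
      then obtain j where j: "i = length xs + j" "j \<le> length ys"
        using i by (metis le_add_diff_inverse length_append nat_le_linear add_le_cancel_left)
      then show ?thesis
        using False assms(2) dobj_append2[OF assms(9), of xs j] dobj_append2[OF ne(2), of xs' j] assms(4,5)
        unfolding ladder_def by auto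
    qed
  next
    fix i assume i: "i < length (xs @ ys)"
    show "Comp C ((xs' @ ys') ! i) (?f i) = Comp C (?f (Suc i)) ((xs @ ys) ! i)"
    proof (cases "i < length xs")
      case True
      then show ?thesis using assms(1,4) unfolding ladder_def by (auto simp: nth_append)
    next
      case False
      then obtain j where j: "i = length xs + j" "j < length ys"
        using i by (metis le_add_diff_inverse length_append not_less add_less_cancel_left)
      have "Comp C (ys' ! j) (\<psi> j) = Comp C (\<psi> (Suc j)) (ys ! j)"
        using assms(2) j unfolding ladder_def by auto
      then show ?thesis using j f2[of i] f2[of "Suc i"] assms(4) by (simp add: nth_append)
    qed
  qed
qed

lemma ladder_composite: assumes "ladder ds es \<phi>" "composable C ds" "composable C es"
  "length ds = length es" "ds \<noteq> []"
  shows "Comp C (composite es) (\<phi> 0) = Comp C (\<phi> (length ds)) (composite ds)"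
  using assms
proof (induction ds arbitrary: es \<phi> rule: rev_induct)
  case Nil then show ?case by simp
next
  case (snoc x xs)
  obtain ys y where es: "es = ys @ [y]"
    using snoc(5) by (metis length_0_conv neq_Nil_conv rev_exhaust snoc_eq_iff_butlast)
  have ly: "length ys = length xs" using snoc(5) es by simp
  show ?case
  proof (cases "xs = []")
    case True
    then have "ys = []" using ly by simp
    then show ?thesis using snoc(2) True es unfolding ladder_def by auto
  next
    case False
    have ne: "ys \<noteq> []" using False ly by auto
    have cx: "composable C xs" "x \<in> Mor C" "Cod C (last xs) = Dom C x"
      using snoc(3) False by (auto simp: composable_append)
    have cy: "composable C ys" "y \<in> Mor C" "Cod C (last ys) = Dom C y"
      using snoc(4) ne es by (auto simp: composable_append)
    have v1: "ladder xs ys \<phi>" and v2: "ladder [x] [y] (\<lambda>i. \<phi> (length xs + i))"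
      using ladder_split[of xs "[x]" ys "[y]" \<phi>] snoc(2,3,4) es ly False by auto
    have IH: "Comp C (composite ys) (\<phi> 0) = Comp C (\<phi> (length xs)) (composite xs)"
      using snoc(1)[OF v1 cx(1) cy(1) ly[symmetric] False] .
    have sq: "Comp C y (\<phi> (length xs)) = Comp C (\<phi> (Suc (length xs))) x"
      using v2 unfolding ladder_def by auto
    note e1 = ladder_ends[OF v1 cx(1) cy(1) ly[symmetric] False]
    note e2 = ladder_ends[OF v2] 
    have t: "iso C (\<phi> (Suc (length xs)))" "Dom C (\<phi> (Suc (length xs))) = Cod C x"
      "Cod C (\<phi> (Suc (length xs))) = Cod C y"
      using e2 cx(2) cy(2) by auto
    have "Comp C (composite (ys @ [y])) (\<phi> 0) = Comp C (Comp C y (composite ys)) (\<phi> 0)"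
      using composite_snoc[OF ne] by simp
    also have "\<dots> = Comp C y (Comp C (composite ys) (\<phi> 0))"
      using Comp_assoc[of "\<phi> 0" "composite ys" y] e1 cy ne by simp
    also have "\<dots> = Comp C y (Comp C (\<phi> (length xs)) (composite xs))" using IH by simp
    also have "\<dots> = Comp C (Comp C y (\<phi> (length xs))) (composite xs)"
      using Comp_assoc[of "composite xs" "\<phi> (length xs)" y] e1 cy cx False by simp
    also have "\<dots> = Comp C (Comp C (\<phi> (Suc (length xs))) x) (composite xs)" using sq by simp
    also have "\<dots> = Comp C (\<phi> (Suc (length xs))) (Comp C x (composite xs))"
      using Comp_assoc[of "composite xs" x "\<phi> (Suc (length xs))"] t cx False by simp
    also have "\<dots> = Comp C (\<phi> (length (xs @ [x]))) (composite (xs @ [x]))"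
      using composite_snoc[OF False] by simp
    finally show ?thesis using es by simp
  qed
qed

lemma dec_iso_single: "dec_iso C [x] [y] \<longleftrightarrow> mor_iso C x y"
proof
  assume "dec_iso C [x] [y]"
  then obtain \<phi> where v: "ladder [x] [y] \<phi>" and m: "x \<in> Mor C" "y \<in> Mor C"
    unfolding dec_iso_ladder by auto
  show "mor_iso C x y"
    apply (rule mor_isoI[where a="\<phi> 0" and b="\<phi> 1"])
      using v m unfolding ladder_def by (auto simp: dobj_def)
next
  assume "mor_iso C x y"
  then obtain a b where A: "x \<in> Mor C" "y \<in> Mor C" "iso C a" "iso C b"
      "Dom C a = Dom C x" "Cod C a = Dom C y" "Dom C b = Cod C x" "Cod C b = Cod C y" "Comp C y a = Comp C b x"
    unfolding mor_iso_def by blast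
  have "ladder [x] [y] (\<lambda>i. if i = 0 then a else b)" by (rule ladderI) (use A in auto)
  then show "dec_iso C [x] [y]" unfolding dec_iso_ladder using A by auto
qed

lemma dec_iso_comp: assumes "dec_iso C ds es" "ds \<noteq> []" shows "mor_iso C (composite ds) (composite es)"
proof -
  obtain \<phi> where v: "ladder ds es \<phi>" "length ds = length es" "composable C ds" "composable C es"
    using assms unfolding dec_iso_ladder by blast
  have ne: "es \<noteq> []" using assms v by auto
  note e = ladder_ends[OF v(1,3,4,2) assms(2)]
  show ?thesis
    apply (rule mor_isoI[where a="\<phi> 0" and b="\<phi> (length ds)"])
    using e ladder_composite[OF v(1,3,4,2) assms(2)] v ne assms(2) by auto
qed

lemma dec_iso_nth: assumes "dec_iso C ds es" "i < length ds" shows "mor_iso C (ds ! i) (es ! i)"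
proof -
  obtain \<phi> where v: "ladder ds es \<phi>" "length ds = length es" "composable C ds" "composable C es"
    using assms unfolding dec_iso_ladder by blast
  note t = ladder_typing[OF v(1,3,4,2) assms(2)]
  show ?thesis by (rule mor_isoI[where a="\<phi> i" and b="\<phi> (Suc i)"]) (use t in auto)
qed

lemma dec_iso_nth_iso: "dec_iso C ds es \<Longrightarrow> i < length ds \<Longrightarrow>
  iso C (ds ! i) \<longleftrightarrow> iso C (es ! i)"
  using dec_iso_nth mor_iso_iso_iff by blast

lemma dec_iso_split: assumes "dec_iso C (xs @ ys) (xs' @ ys')" "length xs = length xs'" "xs \<noteq> []"
  "ys \<noteq> []"
  shows "dec_iso C xs xs'" "dec_iso C ys ys'"
    "dec_iso C [composite xs, composite ys] [composite xs', composite ys']"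
proof -
  obtain \<phi> where v: "ladder (xs@ys) (xs'@ys') \<phi>" "length (xs@ys) = length (xs'@ys')"
    "composable C (xs@ys)" "composable C (xs'@ys')"
    using assms unfolding dec_iso_ladder by blast
  have ly: "length ys = length ys'" using v(2) assms(2) by simp
  have ne: "xs' \<noteq> []" "ys' \<noteq> []" using assms ly by auto
  have c: "composable C xs" "composable C ys" "composable C xs'" "composable C ys'"
    "Cod C (last xs) = Dom C (hd ys)" "Cod C (last xs') = Dom C (hd ys')"
    using v(3,4) assms ne by (auto simp: composable_append)
  note s = ladder_split[OF v(1) assms(2) ly v(3,4) assms(3,4)]
  show "dec_iso C xs xs'" "dec_iso C ys ys'" using s c assms(2) ly unfolding dec_iso_ladder by auto
  note e1 = ladder_ends[OF s(1) c(1,3) assms(2,3)]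
  note e2 = ladder_ends[OF s(2) c(2,4) ly assms(4)]
  note q1 = ladder_composite[OF s(1) c(1,3) assms(2,3)]
  note q2 = ladder_composite[OF s(2) c(2,4) ly assms(4)]
  have "ladder [composite xs, composite ys] [composite xs', composite ys'] (\<lambda>i. if i =
    0 then \<phi> 0 else if i = 1 then \<phi> (length xs) else \<phi> (length xs + length ys))"
    apply (rule ladderI)
    using c assms ne e1 e2 q1 q2 by (auto simp: composable_Cons less_Suc_eq)
  then show "dec_iso C [composite xs, composite ys] [composite xs', composite ys']"
    unfolding dec_iso_ladder using c assms ne by (auto simp: composable_Cons)
qed

lemma dclass_eq: "dec_iso C ds es \<Longrightarrow> dclass C ds = dclass C es"
  unfolding dclass_def using dec_iso_sym dec_iso_trans by blast

lemma dclass_self: "composable C ds \<Longrightarrow> ds \<noteq> [] \<Longrightarrow> ds \<in> dclass C ds"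
  unfolding dclass_def using dec_iso_refl by simp

lemma dclass_eq_iff: assumes "composable C ds" "ds \<noteq> []"
  shows "dclass C ds = dclass C es \<longleftrightarrow> dec_iso C ds es"
proof
  assume "dclass C ds = dclass C es"
  then have "ds \<in> dclass C es" using dclass_self[OF assms] by simp
  then show "dec_iso C ds es" unfolding dclass_def using dec_iso_sym by simp
qed (rule dclass_eq)

lemma rep_dclass: assumes "composable C ds" "ds \<noteq> []" shows "dec_iso C ds (rep (dclass C ds))"
proof -
  have "rep (dclass C ds) \<in> dclass C ds" unfolding rep_def using dclass_self[OF assms] by (rule someI)
  then show ?thesis unfolding dclass_def by simp
qed

lemma Cbar1_closed: "c \<in> Cbar1 C \<Longrightarrow> g \<in> c \<Longrightarrow>
  mor_iso C g h \<Longrightarrow> h \<in> c"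
  unfolding Cbar1_def mclass_def using mor_iso_trans by blast

lemma mclass_in_Cbar1: "f \<in> Mor C \<Longrightarrow> mclass C f \<in> Cbar1 C" unfolding Cbar1_def by simp

lemma decomps_nonempty: "ds \<in> decomps C n c \<Longrightarrow> 1 \<le> n \<Longrightarrow>
  ds \<noteq> []" unfolding decomps_def by auto

lemma decomps_closed: assumes "c \<in> Cbar1 C" "ds \<in> decomps C n c" "1 \<le> n" "dec_iso C ds es"
  shows "es \<in> decomps C n c"
proof -
  have "mor_iso C (composite ds) (composite es)"
    using dec_iso_comp[OF assms(4) decomps_nonempty[OF assms(2,3)]] .
  moreover have "composite ds \<in> c" "length ds = n" using assms(2) unfolding decomps_def by auto
  ultimately have "composite es \<in> c" using Cbar1_closed[OF assms(1)] by blast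
  then show ?thesis using assms(4) \<open>length ds = n\<close> unfolding decomps_def dec_iso_ladder by auto
qed

lemma Dbar_rep: assumes "c \<in> Cbar1 C" "D \<in> Dbar C n c" "1 \<le> n"
  shows "rep D \<in> decomps C n c" "D = dclass C (rep D)" "composable C (rep D)" "rep D \<noteq> []"
    "length (rep D) = n"
proof -
  obtain ds where ds: "ds \<in> decomps C n c" "D = dclass C ds" using assms unfolding Dbar_def by blast
  have c: "composable C ds" "ds \<noteq> []" using ds assms decomps_nonempty unfolding decomps_def by auto
  have d: "dec_iso C ds (rep D)" using rep_dclass[OF c] ds by simp
  then show r: "rep D \<in> decomps C n c" using decomps_closed[OF assms(1) ds(1) assms(3)] by blast
  show "D = dclass C (rep D)" using dclass_eq[OF d] ds(2) by simp
  show "composable C (rep D)" "length (rep D) = n" using r unfolding decomps_def by auto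
  show "rep D \<noteq> []" using decomps_nonempty[OF r assms(3)] .
qed

lemma dclass_in_Dbar: "ds \<in> decomps C n c \<Longrightarrow> dclass C ds \<in> Dbar C n c"
  unfolding Dbar_def by simp

lemma rep_dclass_decomps: assumes "c \<in> Cbar1 C" "ds \<in> decomps C n c" "1 \<le> n"
  shows "dec_iso C ds (rep (dclass C ds))"
  using rep_dclass assms decomps_nonempty unfolding decomps_def by auto

lemma Dbar_1: assumes "f \<in> Mor C" shows "Dbar C 1 (mclass C f) = {dclass C [f]}"
proof
  show "Dbar C 1 (mclass C f) \<subseteq> {dclass C [f]}"
  proof
    fix D assume "D \<in> Dbar C 1 (mclass C f)"
    then obtain ds where ds: "ds \<in> decomps C 1 (mclass C f)" "D = dclass C ds" unfolding Dbar_def by blast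
    then obtain g where g: "ds = [g]" unfolding decomps_def by (auto simp: length_Suc_conv)
    then have "mor_iso C f g" using ds unfolding decomps_def mem_mclass_iff by simp
    then have "dclass C [g] = dclass C [f]" using dclass_eq[of "[f]" "[g]"] dec_iso_single by simp
    then show "D \<in> {dclass C [f]}" using ds g by simp
  qed
  have "[f] \<in> decomps C 1 (mclass C f)" unfolding decomps_def
    using assms mor_iso_refl mem_mclass_iff by simp
  then show "{dclass C [f]} \<subseteq> Dbar C 1 (mclass C f)" using dclass_in_Dbar by simp
qed

lemma dec_iso_precomp:
  assumes zs: "composable C (z # zs)" and h: "iso C h" "Cod C h = Dom C z"
  shows "composable C (Comp C z h # zs)" "dec_iso C (z # zs) (Comp C z h # zs)"
    "composite (Comp C z h # zs) = Comp C (composite (z # zs)) h"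
proof -
  have z: "z \<in> Mor C" "composable C zs" "zs \<noteq> [] \<Longrightarrow> Cod C z = Dom C (hd zs)"
    using zs by (auto simp: composable_Cons)
  show c: "composable C (Comp C z h # zs)" using z h by (auto simp: composable_Cons)
  show "composite (Comp C z h # zs) = Comp C (composite (z # zs)) h"
  proof (cases "zs = []")
    case False
    then show ?thesis
      using composite_Cons[OF c] composite_Cons[OF zs] Comp_assoc[of h z "composite zs"] z h by simp
  qed simp
  have e: "Comp C (Comp C z h) (inv_mor h) = z"
    using Comp_assoc[of "inv_mor h" h z] z h by simp
  have "ladder (z # zs) (Comp C z h # zs) (\<lambda>i. if i = 0 then inv_mor h else Idm C (dobj C (z # zs) i))"
    by (rule ladderI[OF zs c])
      (use z h e dobj_Suc[OF zs] composable_mor[OF z(2)] iso_inv_mor iso_Idm Dom_in_Ob Cod_in_Ob in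
        \<open>auto simp: dobj_lt nth_Cons split: nat.split\<close>)
  then show "dec_iso C (z # zs) (Comp C z h # zs)" unfolding dec_iso_ladder using zs c by auto
qed

lemma take_drop_split: assumes "composable C t" "length t = k + l" "1 \<le> k" "1 \<le> l"
  shows "take k t \<noteq> []" "drop k t \<noteq> []" "composable C (take k t)" "composable C (drop k t)"
    "length (take k t) = k" "length (drop k t) = l" "take k t @ drop k t = t"
    "Cod C (last (take k t)) = Dom C (hd (drop k t))"
      "composite t = Comp C (composite (drop k t)) (composite (take k t))"
    "composable C [composite (take k t), composite (drop k t)]"
      "composite [composite (take k t), composite (drop k t)] = composite t"
proof -
  have t: "t = take k t @ drop k t" by simp
  show "take k t \<noteq> []" "drop k t \<noteq> []" "length (take k t) = k" "length (drop k t) = l"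
    "take k t @ drop k t = t"
    using assms by auto
  have X: "composable C (take k t @ drop k t)" using assms by simp
  note Y = X[unfolded composable_append]
  show c: "composable C (take k t)" "composable C (drop k t)" "Cod C (last (take k t)) = Dom C (hd (drop k t))"
    using Y \<open>take k t \<noteq> []\<close> \<open>drop k t \<noteq> []\<close> by blast+
  show e: "composite t = Comp C (composite (drop k t)) (composite (take k t))"
    using composite_append[of "take k t"
      "drop k t"] assms \<open>take k t \<noteq> []\<close> \<open>drop k t \<noteq> []\<close> by simp
  show "composable C [composite (take k t), composite (drop k t)]"
    using c \<open>take k t \<noteq> []\<close> \<open>drop k t \<noteq> []\<close>
      by (auto simp: composable_Cons)
  then show "composite [composite (take k t), composite (drop k t)] = composite t"
    using e composite_Cons[of "composite (take k t)" "[composite (drop k t)]"] by simp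
qed

end

locale filling_category = category_ctx + assumes fill: "iso_filling C"
begin

lemma iso_fillingE: assumes "a1 \<in> Mor C" "b1 \<in> Mor C" "a2 \<in> Mor C" "b2 \<in> Mor C"
  "Dom C a1 = Dom C a2" "Cod C b1 = Cod C b2" "Cod C a1 = Dom C b1" "Cod C a2 = Dom C b2"
  "Comp C b1 a1 = Comp C b2 a2" "iso C k" "Dom C k = Cod C a1" "Cod C k = Cod C a2"
  obtains h where "iso C h" "Dom C h = Cod C a1" "Cod C h = Cod C a2" "Comp C h a1 = a2" "Comp C b2 h = b1"
proof -
  have "iso_obj C (Cod C a1) (Cod C a2)" using assms unfolding iso_obj_def by blast
  then show ?thesis using fill assms that unfolding iso_filling_def by blast
qed

text \<open>Isomorphism filling lets a ladder between two decompositions be rebuilt rung by rung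
  so that its end rungs are any isomorphisms compatible with the composites.\<close>
lemma ladder_with_ends: "dec_iso C ds es \<Longrightarrow> ds \<noteq> [] \<Longrightarrow>
  iso C \<alpha> \<Longrightarrow> iso C \<beta> \<Longrightarrow> Dom C \<alpha> = Dom C (hd ds)
    \<Longrightarrow>
  Cod C \<alpha> = Dom C (hd es) \<Longrightarrow> Dom C \<beta> = Cod C (last ds) \<Longrightarrow> Cod C
    \<beta> = Cod C (last es) \<Longrightarrow>
  Comp C (composite es) \<alpha> = Comp C \<beta> (composite ds) \<Longrightarrow> \<exists>\<phi>. ladder ds es
    \<phi> \<and> \<phi> 0 = \<alpha> \<and> \<phi> (length ds) = \<beta>"
proof (induction ds arbitrary: es \<alpha>)
  case Nil then show ?case by simp
next
  case (Cons x xs)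
  obtain \<psi> where v: "ladder (x#xs) es \<psi>" "length (x#xs) = length es" "composable C (x#xs)"
    "composable C es"
    using Cons.prems(1) unfolding dec_iso_ladder by blast
  obtain y ys where es: "es = y # ys" using v(2) by (cases es) auto
  have ly: "length xs = length ys" using v(2) es by simp
  show ?case
  proof (cases "xs = []")
    case True
    then have ys: "ys = []" using ly by simp
    have "ladder [x] [y] (\<lambda>i. if i = 0 then \<alpha> else \<beta>)"
      by (rule ladderI) (use Cons.prems v True ys es in auto)
    then show ?thesis using True ys es by auto
  next
    case False
    have ne: "ys \<noteq> []" using False ly by auto
    have cx: "x \<in> Mor C" "composable C xs" "Cod C x = Dom C (hd xs)"
      using v(3) False by (auto simp: composable_Cons)
    have cy: "y \<in> Mor C" "composable C ys" "Cod C y = Dom C (hd ys)"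
      using v(4) ne es by (auto simp: composable_Cons)
    have vs: "ladder [x] [y] \<psi>" "ladder xs ys (\<lambda>i. \<psi> (1 + i))"
      using ladder_split[of "[x]" xs "[y]" ys \<psi>] v es ly False by auto
    have k: "iso C (\<psi> 1)" "Dom C (\<psi> 1) = Cod C x" "Cod C (\<psi> 1) = Cod C y"
      using ladder_typing[OF vs(1), of 0] cx cy by auto
    have lx: "last (x # xs) = last xs" "last es = last ys" using False ne es by auto
    have eq: "Comp C (Comp C \<beta> (composite xs)) x = Comp C (composite ys) (Comp C y \<alpha>)"
    proof -
      have "Comp C (Comp C \<beta> (composite xs)) x = Comp C \<beta> (Comp C (composite xs) x)"
        using Comp_assoc[of x "composite xs" \<beta>] cx False Cons.prems lx by simp
      also have "\<dots> = Comp C \<beta> (composite (x # xs))" using composite_Cons[OF v(3) False] by simp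
      also have "\<dots> = Comp C (composite es) \<alpha>" using Cons.prems by simp
      also have "\<dots> = Comp C (Comp C (composite ys) y) \<alpha>"
        using composite_Cons[of y ys] v(4) es ne by simp
      also have "\<dots> = Comp C (composite ys) (Comp C y \<alpha>)"
        using Comp_assoc[of \<alpha> y "composite ys"] cy ne Cons.prems es by simp
      finally show ?thesis .
    qed
    obtain h where h: "iso C h" "Dom C h = Cod C x" "Cod C h = Cod C (Comp C y \<alpha>)"
      "Comp C h x = Comp C y \<alpha>"
      "Comp C (composite ys) h = Comp C \<beta> (composite xs)"
      apply (rule iso_fillingE[of x "Comp C \<beta> (composite xs)" "Comp C y \<alpha>" "composite ys"
        "\<psi> 1"])
      using cx cy Cons.prems es lx ne False eq k by auto
    have dxy: "dec_iso C xs ys" using vs(2) cx cy ly unfolding dec_iso_ladder by blast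
    obtain \<phi> where \<phi>: "ladder xs ys \<phi>" "\<phi> 0 = h" "\<phi> (length xs) = \<beta>"
      using Cons.IH[OF dxy False h(1) Cons.prems(4)] h cx cy Cons.prems es lx by auto
    have v1: "ladder [x] [y] (\<lambda>i. if i = 0 then \<alpha> else h)"
      by (rule ladderI) (use Cons.prems h cx cy es in auto)
    have "ladder ([x] @ xs) ([y] @ ys) (\<lambda>i. if i \<le> length [x] then (if i =
      0 then \<alpha> else h) else \<phi> (i - length [x]))"
      by (rule ladder_glue[OF v1 \<phi>(1)]) (use \<phi> v es ly False in auto)
    then show ?thesis
      using es \<phi> False
        by (intro exI[of _ "(\<lambda>i. if i \<le> length [x] then (if i =
          0 then \<alpha> else h) else \<phi> (i - length [x]))"]) auto
  qed
qed

lemma dec_iso_glue: assumes "composable C (xs @ ys)" "composable C (xs' @ ys')" "xs \<noteq> []"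
  "ys \<noteq> []"
  "dec_iso C xs xs'" "dec_iso C ys ys'" "dec_iso C [composite xs, composite ys] [composite xs', composite ys']"
  shows "dec_iso C (xs @ ys) (xs' @ ys')"
proof -
  have lx: "length xs = length xs'" "length ys = length ys'" using assms unfolding dec_iso_ladder by auto
  have ne: "xs' \<noteq> []" "ys' \<noteq> []" using assms lx by auto
  have c: "composable C xs" "composable C ys" "composable C xs'" "composable C ys'"
    "Cod C (last xs) = Dom C (hd ys)" "Cod C (last xs') = Dom C (hd ys')"
    using assms ne by (auto simp: composable_append)
  obtain \<phi> where v: "ladder [composite xs, composite ys] [composite xs', composite ys'] \<phi>"
    using assms(7) unfolding dec_iso_ladder by blast
  have cc: "composable C [composite xs, composite ys]" "composable C [composite xs', composite ys']"
    using c assms ne by (auto simp: composable_Cons)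
  note t0 = ladder_typing[OF v cc, of 0] and t1 = ladder_typing[OF v cc, of 1]
  obtain \<psi>1 where p1: "ladder xs xs' \<psi>1" "\<psi>1 0 = \<phi> 0" "\<psi>1 (length xs) = \<phi> 1"
    using ladder_with_ends[OF assms(5,3), of "\<phi> 0" "\<phi> 1"] t0 c assms ne by auto
  obtain \<psi>2 where p2: "ladder ys ys' \<psi>2" "\<psi>2 0 = \<phi> 1" "\<psi>2 (length ys) = \<phi> 2"
    using ladder_with_ends[OF assms(6,4), of "\<phi> 1" "\<phi> 2"] t1 c assms ne by (auto simp: numeral_2_eq_2)
  have "ladder (xs @ ys) (xs' @ ys') (\<lambda>i. if i \<le> length xs then \<psi>1 i else \<psi>2 (i - length xs))"
    by (rule ladder_glue[OF p1(1) p2(1)]) (use p1 p2 lx assms in auto)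
  then show ?thesis unfolding dec_iso_ladder using assms lx by auto
qed

definition split_map where
  "split_map k T =
    (dclass C [composite (take k (rep T)), composite (drop k (rep T))], dclass C (take k (rep T)), dclass C
      (drop k (rep T)))"

definition split_triples where
  "split_triples k l c =
    (SIGMA D:Dbar C 2 c. Dbar C k (mclass C (rep D ! 0)) \<times> Dbar C l (mclass C (rep D ! 1)))"

lemma split_into: assumes "c \<in> Cbar1 C" "1 \<le> k" "1 \<le> l" "T \<in> Dbar C (k+l) c"
  shows "split_map k T \<in> split_triples k l c"
proof -
  let ?t = "rep T"
  have t: "?t \<in> decomps C (k+l) c" "composable C ?t" "length ?t = k + l"
    using Dbar_rep[OF assms(1,4)] assms by auto
  note d = take_drop_split[OF t(2,3) assms(2,3)]
  let ?p = "[composite (take k ?t), composite (drop k ?t)]"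
  have p: "?p \<in> decomps C 2 c" using d t unfolding decomps_def by simp
  let ?r = "rep (dclass C ?p)"
  have pr: "dec_iso C ?p ?r" using rep_dclass_decomps[OF assms(1) p] by simp
  have m0: "mor_iso C (?r ! 0) (composite (take k ?t))" using dec_iso_nth[OF pr, of 0] mor_iso_sym by simp
  have m1: "mor_iso C (?r ! 1) (composite (drop k ?t))" using dec_iso_nth[OF pr, of 1] mor_iso_sym by simp
  have "take k ?t \<in> decomps C k (mclass C (?r ! 0))" using m0 d unfolding decomps_def mem_mclass_iff by simp
  moreover have "drop k ?t \<in> decomps C l (mclass C (?r ! 1))"
    using m1 d unfolding decomps_def mem_mclass_iff by simp
  ultimately show ?thesis unfolding split_map_def split_triples_def
    using dclass_in_Dbar[OF p] dclass_in_Dbar by auto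
qed

lemma split_inj: assumes "c \<in> Cbar1 C" "1 \<le> k" "1 \<le> l"
  shows "inj_on (split_map k) (Dbar C (k+l) c)"
proof (rule inj_onI)
  fix T T' assume T: "T \<in> Dbar C (k+l) c" and T': "T' \<in> Dbar C (k+l) c" and eq: "split_map k T =
    split_map k T'"
  let ?t = "rep T" and ?t' = "rep T'"
  have t: "composable C ?t" "length ?t = k + l" "T = dclass C ?t" using Dbar_rep[OF assms(1) T] assms by auto
  have t': "composable C ?t'" "length ?t' = k + l" "T' = dclass C ?t'"
    using Dbar_rep[OF assms(1) T'] assms by auto
  note d = take_drop_split[OF t(1,2) assms(2,3)] and d' = take_drop_split[OF t'(1,2) assms(2,3)]
  have e: "dclass C [composite (take k ?t), composite (drop k ?t)] =
    dclass C [composite (take k ?t'), composite (drop k ?t')]"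
     "dclass C (take k ?t) = dclass C (take k ?t')" "dclass C (drop k ?t) = dclass C (drop k ?t')"
    using eq unfolding split_map_def by auto
  have i1: "dec_iso C [composite (take k ?t), composite (drop k ?t)] [composite (take k ?t'), composite (drop k ?t')]"
    using e(1) dclass_eq_iff[of "[composite (take k ?t), composite (drop k ?t)]"] d by simp
  have i2: "dec_iso C (take k ?t) (take k ?t')" using e(2) dclass_eq_iff d by simp
  have i3: "dec_iso C (drop k ?t) (drop k ?t')" using e(3) dclass_eq_iff d by simp
  have "dec_iso C (take k ?t @ drop k ?t) (take k ?t' @ drop k ?t')"
    by (rule dec_iso_glue) (use d d' i1 i2 i3 t t' in auto)
  then have tt: "dec_iso C ?t ?t'" by simp
  show "T = T'" using dclass_eq[OF tt] t(3) t'(3) by simp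
qed

text \<open>Given a 2-decomposition (r0, r1) and decompositions e1 of r0 and e2 of r1 (up to
  isomorphism), twisting the first factor of e2 by the comparison isomorphism makes e1 and e2
  composable.\<close>
lemma glue_decomps:
  assumes c: "c \<in> Cbar1 C" and kl: "1 \<le> k" "1 \<le> l" and r: "r \<in> decomps C 2 c"
    and e1: "e1 \<in> decomps C k (mclass C (r ! 0))" and e2: "e2 \<in> decomps C l (mclass C (r ! 1))"
  obtains t where "t \<in> decomps C (k + l) c" "dec_iso C (take k t) e1" "dec_iso C (drop k t) e2"
    "dec_iso C r [composite (take k t), composite (drop k t)]"
proof -
  have r01: "r ! 0 \<in> Mor C" "r ! 1 \<in> Mor C" "Cod C (r ! 0) = Dom C (r ! 1)" "length r = 2"
    "composable C r"
    using r composable_mor composable_link[of r 0] unfolding decomps_def by auto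
  have e1': "composable C e1" "e1 \<noteq> []" "length e1 = k" "mor_iso C (r ! 0) (composite e1)"
    using e1 kl unfolding decomps_def mem_mclass_iff by auto
  have e2': "composable C e2" "e2 \<noteq> []" "length e2 = l" "mor_iso C (r ! 1) (composite e2)"
    using e2 kl unfolding decomps_def mem_mclass_iff by auto
  obtain a1 b1 where A: "iso C a1" "iso C b1"
      "Dom C a1 = Dom C (r ! 0)" "Cod C a1 = Dom C (composite e1)" "Dom C b1 = Cod C (r ! 0)"
      "Cod C b1 = Cod C (composite e1)" "Comp C (composite e1) a1 = Comp C b1 (r ! 0)"
    using e1'(4) unfolding mor_iso_def by blast
  obtain a2 b2 where B: "iso C a2" "iso C b2"
      "Dom C a2 = Dom C (r ! 1)" "Cod C a2 = Dom C (composite e2)" "Dom C b2 = Cod C (r ! 1)"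
      "Cod C b2 = Cod C (composite e2)" "Comp C (composite e2) a2 = Comp C b2 (r ! 1)"
    using e2'(4) unfolding mor_iso_def by blast
  let ?h = "Comp C a2 (inv_mor b1)"
  let ?e2 = "Comp C (hd e2) ?h # tl e2"
  have e2_eq: "hd e2 # tl e2 = e2" using e2'(2) by simp
  have z: "hd e2 \<in> Mor C" "Dom C (composite e2) = Dom C (hd e2)"
    using e2' composable_Cons[of "hd e2" "tl e2"] e2_eq by auto
  then have h: "iso C ?h" "Dom C ?h = Cod C (composite e1)" "Cod C ?h = Dom C (hd e2)"
    using A B r01 iso_Comp iso_inv_mor by auto
  note M = dec_iso_precomp[of "hd e2" "tl e2" ?h, unfolded e2_eq, OF e2'(1) h(1,3)]
  let ?t = "e1 @ ?e2"
  have ct: "composable C ?t" and lt: "length ?t = k + l"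
    using e1' e2' M h z by (auto simp: composable_append)
  have tk: "take k ?t = e1" "drop k ?t = ?e2" using e1' by auto
  have "Comp C (composite ?e2) b1 = Comp C (composite e2) (Comp C ?h b1)"
    using M Comp_assoc[of b1 ?h "composite e2"] h A e2' z by (simp del: comp_list.simps)
  also have "\<dots> = Comp C (composite e2) a2"
    using Comp_assoc[of b1 "inv_mor b1" a2] A B r01 by simp
  finally have sq: "Comp C (composite ?e2) b1 = Comp C b2 (r ! 1)" using B by simp
  have "ladder r [composite e1, composite ?e2] (\<lambda>i. if i = 0 then a1 else if i = 1 then b1 else b2)"
    by (rule ladderI)
      (use r01 A B M h sq e1' e2' z in \<open>auto simp: less_Suc_eq numeral_2_eq_2 composable_Cons
        simp del: comp_list.simps\<close>)
  then have pr: "dec_iso C r [composite e1, composite ?e2]"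
    unfolding dec_iso_ladder using r01 take_drop_split[OF ct lt kl] tk by auto
  have "mor_iso C (composite r) (composite [composite e1, composite ?e2])"
    using dec_iso_comp[OF pr] r01 by fastforce
  moreover have "composite [composite e1, composite ?e2] = composite ?t"
    using take_drop_split(11)[OF ct lt kl] tk by simp
  ultimately have "?t \<in> decomps C (k + l) c"
    using r Cbar1_closed[OF c] ct lt unfolding decomps_def by auto
  moreover have "dec_iso C (take k ?t) e1" "dec_iso C (drop k ?t) e2"
    using tk dec_iso_refl[OF e1'(1,2)] dec_iso_sym[OF M(2)] by simp_all
  ultimately show ?thesis using that pr tk by simp
qed

lemma split_onto:
  assumes c: "c \<in> Cbar1 C" and kl: "1 \<le> k" "1 \<le> l" and X: "X \<in> split_triples k l c"
  shows "X \<in> split_map k ` Dbar C (k + l) c"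
proof -
  obtain D E1 E2 where X': "X = (D, E1, E2)" "D \<in> Dbar C 2 c" "E1 \<in> Dbar C k (mclass C (rep D ! 0))"
    "E2 \<in> Dbar C l (mclass C (rep D ! 1))" using X unfolding split_triples_def by auto
  have r: "rep D \<in> decomps C 2 c" "D = dclass C (rep D)" "composable C (rep D)" "length (rep D) = 2"
    using Dbar_rep[OF c X'(2)] by auto
  then have "mclass C (rep D ! 0) \<in> Cbar1 C" "mclass C (rep D ! 1) \<in> Cbar1 C"
    using composable_mor mclass_in_Cbar1 by auto
  then have e: "rep E1 \<in> decomps C k (mclass C (rep D ! 0))" "E1 = dclass C (rep E1)"
    "rep E2 \<in> decomps C l (mclass C (rep D ! 1))" "E2 = dclass C (rep E2)"
    using Dbar_rep X'(3,4) kl by auto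
  obtain t where t: "t \<in> decomps C (k + l) c" "dec_iso C (take k t) (rep E1)"
    "dec_iso C (drop k t) (rep E2)"
    "dec_iso C (rep D) [composite (take k t), composite (drop k t)]"
    using glue_decomps[OF c kl r(1) e(1,3)] by blast
  let ?T = "dclass C t" and ?t' = "rep (dclass C t)"
  have T: "?T \<in> Dbar C (k + l) c" using dclass_in_Dbar[OF t(1)] .
  have tt: "dec_iso C t ?t'" using rep_dclass_decomps[OF c t(1)] kl by simp
  have ct: "composable C t" "length t = k + l" using t(1) unfolding decomps_def by auto
  have ct': "composable C ?t'" "length ?t' = k + l" using Dbar_rep[OF c T] kl by auto
  note d = take_drop_split[OF ct kl] and d' = take_drop_split[OF ct' kl]
  have sp: "dec_iso C (take k t) (take k ?t')" "dec_iso C (drop k t) (drop k ?t')"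
     "dec_iso C [composite (take k t), composite (drop k t)] [composite (take k ?t'), composite (drop k ?t')]"
    using dec_iso_split[of "take k t" "drop k t" "take k ?t'" "drop k ?t'"] tt d d' by auto
  have "dclass C [composite (take k ?t'), composite (drop k ?t')] = D"
    using dclass_eq[OF dec_iso_trans[OF t(4) sp(3)]] r(2) by simp
  moreover have "dclass C (take k ?t') = E1"
    using dclass_eq[OF dec_iso_trans[OF dec_iso_sym[OF t(2)] sp(1)]] e(2) by simp
  moreover have "dclass C (drop k ?t') = E2"
    using dclass_eq[OF dec_iso_trans[OF dec_iso_sym[OF t(3)] sp(2)]] e(4) by simp
  ultimately have "split_map k ?T = X" unfolding split_map_def using X' by simp
  then show ?thesis using T by force
qed

lemma split_bij: assumes "c \<in> Cbar1 C" "1 \<le> k" "1 \<le> l"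
  shows "bij_betw (split_map k) (Dbar C (k+l) c) (split_triples k l c)"
  unfolding bij_betw_def using split_inj[OF assms] split_into[OF assms] split_onto[OF assms] by blast

lemma rep_dclass_nth_mclass:
  assumes "composable C ds" "ds \<noteq> []" "i < length ds"
  shows "mclass C (rep (dclass C ds) ! i) = mclass C (ds ! i)"
  using dec_iso_nth[OF rep_dclass[OF assms(1,2)] assms(3)] mclass_eqI by simp

lemma map_mclass_rep_dclass:
  assumes "composable C ds" "ds \<noteq> []"
  shows "map (mclass C) (rep (dclass C ds)) = map (mclass C) ds"
proof (rule nth_equalityI)
  show "length (map (mclass C) (rep (dclass C ds))) = length (map (mclass C) ds)"
    using rep_dclass[OF assms] unfolding dec_iso_def by simp
  then show "map (mclass C) (rep (dclass C ds)) ! i = map (mclass C) ds ! i"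
    if "i < length (map (mclass C) (rep (dclass C ds)))" for i
    using that rep_dclass_nth_mclass[OF assms] by simp
qed

text \<open>Via the bijection split_map, summing over triples (D, E, E') amounts to summing over
  (k + l)-decompositions, for any function of the word of morphism classes.\<close>
lemma sum_Dbar_split:
  assumes c: "c \<in> Cbar1 C" and kl: "1 \<le> k" "1 \<le> l"
    and fin: "finite (Dbar C 2 c)"
      "\<And>D. D \<in> Dbar C 2 c \<Longrightarrow> finite (Dbar C k (mclass C (rep D ! 0)))"
      "\<And>D. D \<in> Dbar C 2 c \<Longrightarrow> finite (Dbar C l (mclass C (rep D ! 1)))"
  shows "(\<Sum>D\<in>Dbar C 2 c. \<Sum>E\<in>Dbar C k (mclass C (rep D ! 0)).
            \<Sum>E'\<in>Dbar C l (mclass C (rep D ! 1)). G (map (mclass C) (rep E @ rep E')))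
       = (\<Sum>T\<in>Dbar C (k + l) c. G (map (mclass C) (rep T)))"
proof -
  let ?G = "\<lambda>(D :: 'b list set, E, E'). G (map (mclass C) (rep E @ rep E'))"
  have "(\<Sum>D\<in>Dbar C 2 c. \<Sum>E\<in>Dbar C k (mclass C (rep D ! 0)).
            \<Sum>E'\<in>Dbar C l (mclass C (rep D ! 1)). G (map (mclass C) (rep E @ rep E')))
      = (\<Sum>D\<in>Dbar C 2 c.
            \<Sum>EE'\<in>Dbar C k (mclass C (rep D ! 0)) \<times> Dbar C l (mclass C (rep D ! 1)). ?G (D,
              EE'))"
    by (simp add: sum.cartesian_product case_prod_beta)
  also have "\<dots> = sum ?G (split_triples k l c)"
    unfolding split_triples_def using fin by (subst sum.Sigma) auto
  also have "\<dots> = (\<Sum>T\<in>Dbar C (k + l) c. ?G (split_map k T))"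
    by (rule sum.reindex_bij_betw[OF split_bij[OF c kl], symmetric])
  also have "\<dots> = (\<Sum>T\<in>Dbar C (k + l) c. G (map (mclass C) (rep T)))"
  proof (rule sum.cong[OF refl])
    fix T assume "T \<in> Dbar C (k + l) c"
    then have "composable C (rep T)" "length (rep T) = k + l" using Dbar_rep[OF c] kl by auto
    note t = take_drop_split[OF this kl]
    have "map (mclass C) (rep (dclass C (take k (rep T))) @ rep (dclass C (drop k (rep T))))
        = map (mclass C) (take k (rep T) @ drop k (rep T))"
      unfolding map_append map_mclass_rep_dclass[OF t(3,1)] map_mclass_rep_dclass[OF t(4,2)] ..
    then show "?G (split_map k T) = G (map (mclass C) (rep T))"
      unfolding split_map_def by simp
  qed
  finally show ?thesis .
qed

end

locale efd_category = filling_category + assumes efd: "ess_finite_decomp C"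
begin

lemma finite_PDbar_Sigma: "c \<in> Cbar1 C \<Longrightarrow> finite (SIGMA n:{1..}. PDbar C n c)"
  using efd unfolding ess_finite_decomp_def by blast

lemma composable_replicate_pair:
  assumes "f \<in> Mor C" "r \<in> Mor C" "Cod C f = Dom C r" "Comp C r f = Idm C (Dom C f)"
  shows "composable C (concat (replicate (Suc k) [f, r])) \<and>
         composite (concat (replicate (Suc k) [f, r])) = Idm C (Dom C f)"
proof (induction k)
  case 0
  have "composable C [f, r]" using assms by (simp add: composable_Cons)
  then show ?case using composite_Cons assms by simp
next
  case (Suc k)
  let ?w = "concat (replicate (Suc k) [f, r])"
  have "Cod C r = Dom C f" using Cod_Comp[of f r] assms Dom_in_Ob by simp
  then have c: "composable C ([f, r] @ ?w)" "composable C [f, r]"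
    using Suc assms by (simp_all add: composable_append composable_Cons del: comp_list.simps)
  have "composite ([f, r] @ ?w) = Comp C (composite ?w) (composite [f, r])"
    using composite_append[OF c(1)] by simp
  also have "\<dots> = Idm C (Dom C f)" using Suc composite_Cons[OF c(2)] assms Dom_in_Ob by simp
  finally show ?case using c(1) by simp
qed

text \<open>If r f = 1 with f not invertible, then neither is r, and (f, r, f, r, ...) are proper
  decompositions of an identity of every even length.\<close>
lemma section_iso:
  assumes f: "f \<in> Mor C" and r: "r \<in> Mor C" "Cod C f = Dom C r" and rf: "Comp C r f = Idm C (Dom C f)"
  shows "iso C f"
proof (rule ccontr)
  assume nf: "\<not> iso C f"
  have x: "Dom C f \<in> Ob C" using f Dom_in_Ob by simp
  have nr: "\<not> iso C r"
    using nf iso_right_factor[of r f] f r rf iso_Idm[OF x] by auto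
  let ?c = "mclass C (Idm C (Dom C f))"
  have "(2 * Suc k, dclass C (concat (replicate (Suc k) [f, r]))) \<in> (SIGMA n:{1..}. PDbar C n ?c)" for k
  proof -
    let ?w = "concat (replicate (Suc k) [f, r])"
    have "?w \<in> decomps C (2 * Suc k) ?c"
      using composable_replicate_pair[OF f r rf] mor_iso_refl x mem_mclass_iff
      unfolding decomps_def by (simp add: length_concat sum_list_replicate del: comp_list.simps)
    moreover have "\<forall>i<2 * Suc k. \<not> iso C (?w ! i)"
    proof (intro allI impI)
      fix i assume "i < 2 * Suc k"
      moreover have "length ?w = 2 * Suc k" "set ?w = {f, r}"
        by (auto simp: length_concat sum_list_replicate)
      ultimately have "?w ! i \<in> {f, r}" using nth_mem[of i ?w] by simp
      then show "\<not> iso C (?w ! i)" using nf nr by auto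
    qed
    ultimately show ?thesis unfolding PDbar_def by auto
  qed
  then have "range (\<lambda>k. 2 * Suc k) \<subseteq> fst ` (SIGMA n:{1..}. PDbar C n ?c)" by force
  then have "finite (range (\<lambda>k::nat. 2 * Suc k))"
    using finite_PDbar_Sigma[OF mclass_in_Cbar1[OF Idm_in_Mor[OF x]]] finite_subset by blast
  moreover have "inj (\<lambda>k::nat. 2 * Suc k)" by (rule injI) simp
  ultimately show False using finite_imageD by fastforce
qed

lemma iso_Comp_factors:
  assumes fg: "f \<in> Mor C" "g \<in> Mor C" "Cod C f = Dom C g" and u: "iso C (Comp C g f)"
  shows "iso C f" "iso C g"
proof -
  let ?u = "Comp C g f"
  have "Comp C (Comp C (inv_mor ?u) g) f = Comp C (inv_mor ?u) ?u"
    using Comp_assoc[of f g "inv_mor ?u"] fg u by simp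
  then show f: "iso C f"
    using section_iso[OF fg(1), of "Comp C (inv_mor ?u) g"] fg u by simp
  show "iso C g" using iso_left_factor[OF f fg(2,3) u] .
qed

lemma iso_composite_nth:
  "composable C ds \<Longrightarrow> ds \<noteq> [] \<Longrightarrow> iso C (composite ds) \<Longrightarrow>
    i < length ds \<Longrightarrow> iso C (ds ! i)"
proof (induction ds arbitrary: i)
  case Nil then show ?case by simp
next
  case (Cons x xs)
  show ?case
  proof (cases "xs = []")
    case True then show ?thesis using Cons by simp
  next
    case False
    have c: "x \<in> Mor C" "composable C xs" "Cod C x = Dom C (hd xs)"
      using Cons.prems False by (auto simp: composable_Cons)
    have "iso C x" "iso C (composite xs)"
      using iso_Comp_factors[of x "composite xs"] Cons.prems composite_Cons c False by simp_all
    then show ?thesis using Cons c False by (cases i) auto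
  qed
qed

definition proper_dclasses where
  "proper_dclasses n c = dclass C ` {ds \<in> decomps C n c. \<forall>i<n. \<not> iso C (ds ! i)}"

lemma proper_dclasses_subset: "proper_dclasses n c \<subseteq> Dbar C n c"
  unfolding proper_dclasses_def Dbar_def by auto

lemma mem_proper_dclasses_iff:
  assumes "c \<in> Cbar1 C" "1 \<le> n" "X \<in> Dbar C n c"
  shows "X \<in> proper_dclasses n c \<longleftrightarrow> (\<forall>i<n. \<not> iso C (rep X ! i))"
proof
  assume "X \<in> proper_dclasses n c"
  then obtain ds where ds: "ds \<in> decomps C n c" "\<forall>i<n. \<not> iso C (ds ! i)" "X = dclass C ds"
    unfolding proper_dclasses_def by auto
  have "dec_iso C ds (rep X)" using rep_dclass_decomps[OF assms(1) ds(1) assms(2)] ds(3) by simp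
  then show "\<forall>i<n. \<not> iso C (rep X ! i)" using ds dec_iso_nth_iso unfolding decomps_def by auto
next
  assume "\<forall>i<n. \<not> iso C (rep X ! i)"
  then show "X \<in> proper_dclasses n c"
    using Dbar_rep[OF assms(1,3,2)] unfolding proper_dclasses_def by auto
qed

lemma Cbar1_obtain:
  assumes "c \<in> Cbar1 C" obtains f where "f \<in> Mor C" "c = mclass C f"
  using assms unfolding Cbar1_def by blast

lemma decomps_iso_nth:
  assumes f: "iso C f" and ds: "ds \<in> decomps C n (mclass C f)" and i: "i < n"
  shows "iso C (ds ! i)"
proof -
  have "composable C ds" "length ds = n" "mor_iso C f (composite ds)"
    using ds mem_mclass_iff unfolding decomps_def by auto
  moreover have "ds \<noteq> []" using \<open>length ds = n\<close> i by auto
  ultimately show ?thesis using mor_iso_iso[OF _ f] iso_composite_nth[of ds i] i by auto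
qed

lemma proper_dclasses_iso:
  assumes "iso C f" "1 \<le> n" shows "proper_dclasses n (mclass C f) = {}"
  using decomps_iso_nth[OF assms(1)] assms(2) unfolding proper_dclasses_def by force

lemma PDbar_eq_proper_dclasses:
  assumes f: "f \<in> Mor C" "\<not> iso C f" and n: "1 \<le> n"
  shows "PDbar C n (mclass C f) = proper_dclasses n (mclass C f)"
proof (cases "n = 1")
  case True
  have "\<not> iso C (ds ! 0)" if "ds \<in> decomps C 1 (mclass C f)" for ds
  proof -
    have "mor_iso C f (ds ! 0)" using that unfolding decomps_def mem_mclass_iff by (auto simp: length_Suc_conv)
    then show ?thesis using f(2) mor_iso_iso_iff by blast
  qed
  then show ?thesis unfolding PDbar_def proper_dclasses_def Dbar_def using True by auto
next
  case False then show ?thesis unfolding PDbar_def proper_dclasses_def by simp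
qed

lemma proper_dclasses_1:
  assumes "f \<in> Mor C" "\<not> iso C f" shows "proper_dclasses 1 (mclass C f) = {dclass C [f]}"
  using PDbar_eq_proper_dclasses[OF assms, of 1] Dbar_1[OF assms(1)] unfolding PDbar_def by simp

lemma proper_dclasses_subset_PDbar: "1 \<le> n \<Longrightarrow> proper_dclasses n c \<subseteq> PDbar C n c"
  unfolding PDbar_def using proper_dclasses_subset[of n c] by (auto simp: proper_dclasses_def)

lemma finite_proper_dclasses:
  assumes "c \<in> Cbar1 C" "1 \<le> n" shows "finite (proper_dclasses n c)"
proof -
  have "proper_dclasses n c \<subseteq> snd ` (SIGMA n:{1..}. PDbar C n c)"
    using proper_dclasses_subset_PDbar[OF assms(2)] assms(2) by force
  then show ?thesis using finite_PDbar_Sigma[OF assms(1)] finite_subset by blast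
qed

lemma finite_proper_lengths:
  assumes "c \<in> Cbar1 C" shows "finite {n. 1 \<le> n \<and> proper_dclasses n c \<noteq> {}}"
proof -
  have "{n. 1 \<le> n \<and> proper_dclasses n c \<noteq> {}} \<subseteq> fst ` (SIGMA n:{1..}. PDbar C n c)"
    using proper_dclasses_subset_PDbar by force
  then show ?thesis using finite_PDbar_Sigma[OF assms] finite_subset by blast
qed

lemma Dbar2_rep:
  assumes "f \<in> Mor C" "D \<in> Dbar C 2 (mclass C f)"
  shows "rep D \<in> decomps C 2 (mclass C f)" "length (rep D) = 2" "composable C (rep D)"
    "rep D ! 0 \<in> Mor C" "rep D ! 1 \<in> Mor C"
    "mclass C (rep D ! 0) \<in> Cbar1 C" "mclass C (rep D ! 1) \<in> Cbar1 C"
proof -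
  show r: "rep D \<in> decomps C 2 (mclass C f)" "composable C (rep D)" "length (rep D) = 2"
    using Dbar_rep[OF mclass_in_Cbar1[OF assms(1)] assms(2)] by auto
  show "rep D ! 0 \<in> Mor C" "rep D ! 1 \<in> Mor C" using r composable_mor by auto
  then show "mclass C (rep D ! 0) \<in> Cbar1 C" "mclass C (rep D ! 1) \<in> Cbar1 C"
    using mclass_in_Cbar1 by auto
qed

lemma Dbar2_iso_at:
  assumes c: "c \<in> Cbar1 C" and i: "i < 2" and p: "p \<in> decomps C 2 c" "iso C (p ! i)"
    and uniq: "\<And>ds. ds \<in> decomps C 2 c \<Longrightarrow> iso C (ds ! i) \<Longrightarrow>
      dec_iso C p ds"
  shows "{D \<in> Dbar C 2 c. iso C (rep D ! i)} = {dclass C p}"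
proof
  show "{D \<in> Dbar C 2 c. iso C (rep D ! i)} \<subseteq> {dclass C p}"
  proof
    fix D assume "D \<in> {D \<in> Dbar C 2 c. iso C (rep D ! i)}"
    then have "rep D \<in> decomps C 2 c" "D = dclass C (rep D)" "iso C (rep D ! i)"
      using Dbar_rep[OF c] by auto
    then show "D \<in> {dclass C p}" using uniq[of "rep D"] dclass_eq[of p "rep D"] by simp
  qed
  have "iso C (rep (dclass C p) ! i)"
    using rep_dclass_decomps[OF c p(1)] dec_iso_nth_iso p i unfolding decomps_def by auto
  then show "{dclass C p} \<subseteq> {D \<in> Dbar C 2 c. iso C (rep D ! i)}"
    using dclass_in_Dbar[OF p(1)] by auto
qed

lemma dec_iso_unit_fst:
  assumes f: "f \<in> Mor C" and ds: "ds \<in> decomps C 2 (mclass C f)" "iso C (ds ! 0)"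
  shows "dec_iso C [Idm C (Dom C f), f] ds"
proof -
  let ?p = "[Idm C (Dom C f), f]"
  have x: "Dom C f \<in> Ob C" using f Dom_in_Ob by simp
  have cp: "composable C ?p" using f x by (simp add: composable_Cons)
  obtain a b where ab: "ds = [a, b]"
    using ds unfolding decomps_def by (auto simp: numeral_2_eq_2 length_Suc_conv)
  have cab: "composable C [a, b]" "mor_iso C f (Comp C b a)"
    using ds ab composite_Cons[of a "[b]"] unfolding decomps_def mem_mclass_iff by auto
  have m: "a \<in> Mor C" "b \<in> Mor C" "Cod C a = Dom C b" using cab by (auto simp: composable_Cons)
  obtain \<alpha> \<beta> where A: "iso C \<alpha>" "iso C \<beta>" "Dom C \<alpha> = Dom C f"
    "Cod C \<alpha> = Dom C (Comp C b a)"
    "Dom C \<beta> = Cod C f" "Cod C \<beta> = Cod C (Comp C b a)"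
      "Comp C (Comp C b a) \<alpha> = Comp C \<beta> f"
    using cab(2) unfolding mor_iso_def by blast
  have ia: "iso C a" using ds ab by simp
  have e: "Comp C b (Comp C a \<alpha>) = Comp C \<beta> f" using A Comp_assoc[of \<alpha> a b] m by simp
  have "ladder ?p [a, b] (\<lambda>i. if i = 0 then \<alpha> else if i = 1 then Comp C a \<alpha> else \<beta>)"
    by (rule ladderI[OF cp cab(1)])
      (use A m ia iso_Comp[of \<alpha> a] x e f in \<open>auto simp: less_Suc_eq numeral_2_eq_2\<close>)
  then show ?thesis unfolding dec_iso_ladder using cp cab ab by auto
qed

lemma dec_iso_unit_snd:
  assumes f: "f \<in> Mor C" and ds: "ds \<in> decomps C 2 (mclass C f)" "iso C (ds ! 1)"
  shows "dec_iso C [f, Idm C (Cod C f)] ds"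
proof -
  let ?y = "Cod C f" let ?p = "[f, Idm C ?y]"
  have y: "?y \<in> Ob C" using f Cod_in_Ob by simp
  have cp: "composable C ?p" using f y by (simp add: composable_Cons)
  obtain a b where ab: "ds = [a, b]"
    using ds unfolding decomps_def by (auto simp: numeral_2_eq_2 length_Suc_conv)
  have cab: "composable C [a, b]" "mor_iso C f (Comp C b a)"
    using ds ab composite_Cons[of a "[b]"] unfolding decomps_def mem_mclass_iff by auto
  have m: "a \<in> Mor C" "b \<in> Mor C" "Cod C a = Dom C b" using cab by (auto simp: composable_Cons)
  obtain \<alpha> \<beta> where A: "iso C \<alpha>" "iso C \<beta>" "Dom C \<alpha> = Dom C f"
    "Cod C \<alpha> = Dom C (Comp C b a)"
    "Dom C \<beta> = Cod C f" "Cod C \<beta> = Cod C (Comp C b a)"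
      "Comp C (Comp C b a) \<alpha> = Comp C \<beta> f"
    using cab(2) unfolding mor_iso_def by blast
  have ib: "iso C b" using ds ab by simp
  let ?m = "Comp C (inv_mor b) \<beta>"
  have im: "iso C ?m" "Dom C ?m = Cod C f" "Cod C ?m = Cod C a"
    using A ib m iso_Comp iso_inv_mor by auto
  have e1: "Comp C a \<alpha> = Comp C ?m f"
  proof -
    have "Comp C ?m f = Comp C (inv_mor b) (Comp C b (Comp C a \<alpha>))"
      using Comp_assoc[of f \<beta> "inv_mor b"] Comp_assoc[of \<alpha> a b] A ib m f by simp
    also have "\<dots> = Comp C (Comp C (inv_mor b) b) (Comp C a \<alpha>)"
      using Comp_assoc[of "Comp C a \<alpha>" b "inv_mor b"] A m ib by simp
    finally show ?thesis using A m ib by simp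
  qed
  have e2: "Comp C b ?m = Comp C \<beta> (Idm C ?y)"
    using Comp_assoc[of \<beta> "inv_mor b" b] A ib m f by simp
  have "ladder ?p [a, b] (\<lambda>i. if i = 0 then \<alpha> else if i = 1 then ?m else \<beta>)"
    by (rule ladderI[OF cp cab(1)])
      (use A m ib im y e1 e2 f in \<open>auto simp: less_Suc_eq numeral_2_eq_2\<close>)
  then show ?thesis unfolding dec_iso_ladder using cp cab ab by auto
qed

lemma unit_decomps:
  assumes f: "f \<in> Mor C"
  shows "[Idm C (Dom C f), f] \<in> decomps C 2 (mclass C f)"
    "[f, Idm C (Cod C f)] \<in> decomps C 2 (mclass C f)"
proof -
  have x: "Dom C f \<in> Ob C" "Cod C f \<in> Ob C" using f Dom_in_Ob Cod_in_Ob by auto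
  have "composable C [Idm C (Dom C f), f]" "composable C [f, Idm C (Cod C f)]"
    using f x by (simp_all add: composable_Cons)
  then show "[Idm C (Dom C f), f] \<in> decomps C 2 (mclass C f)"
    "[f, Idm C (Cod C f)] \<in> decomps C 2 (mclass C f)"
    unfolding decomps_def using composite_Cons f x mor_iso_refl mem_mclass_iff by auto
qed

lemma Dbar2_iso_fst:
  assumes f: "f \<in> Mor C"
  shows "{D \<in> Dbar C 2 (mclass C f). iso C (rep D ! 0)} = {dclass C [Idm C (Dom C f), f]}"
  using Dbar2_iso_at[OF mclass_in_Cbar1[OF f] _ unit_decomps(1)[OF f]] dec_iso_unit_fst[OF f]
    iso_Idm Dom_in_Ob f by simp

lemma Dbar2_iso_snd:
  assumes f: "f \<in> Mor C"
  shows "{D \<in> Dbar C 2 (mclass C f). iso C (rep D ! 1)} = {dclass C [f, Idm C (Cod C f)]}"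
  using Dbar2_iso_at[OF mclass_in_Cbar1[OF f] _ unit_decomps(2)[OF f]] dec_iso_unit_snd[OF f]
    iso_Idm Cod_in_Ob f by simp

lemma finite_Dbar2:
  assumes f: "f \<in> Mor C" shows "finite (Dbar C 2 (mclass C f))"
proof -
  let ?c = "mclass C f"
  have c: "?c \<in> Cbar1 C" using mclass_in_Cbar1[OF f] .
  have "Dbar C 2 ?c \<subseteq> {D \<in> Dbar C 2 ?c. iso C (rep D ! 0)}
      \<union> {D \<in> Dbar C 2 ?c. iso C (rep D ! 1)} \<union> proper_dclasses 2 ?c"
    using mem_proper_dclasses_iff[OF c, of 2] by (auto simp: less_Suc_eq numeral_2_eq_2)
  then show ?thesis
    unfolding Dbar2_iso_fst[OF f] Dbar2_iso_snd[OF f]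
    using finite_proper_dclasses[OF c, of 2] finite_subset by auto
qed

definition noniso_fst where "noniso_fst c = {D \<in> Dbar C 2 c. \<not> iso C (rep D ! 0)}"
definition noniso_snd where "noniso_snd c = {D \<in> Dbar C 2 c. \<not> iso C (rep D ! 1)}"

lemma noniso_fst_iso: "iso C f \<Longrightarrow> noniso_fst (mclass C f) = {}"
  using Dbar2_rep decomps_iso_nth[of f _ 2 0] unfolding noniso_fst_def by auto

lemma conv_eq_sum:
  "conv C \<alpha> \<beta> c =
    (\<Sum>D\<in>Dbar C 2 c. \<alpha> (mclass C (rep D ! 0)) * \<beta> (mclass C (rep D ! 1)))"
  unfolding conv_def rep_def Let_def by simp

lemma conv_split_fst:
  assumes f: "f \<in> Mor C"
  shows "conv C \<alpha> \<beta> (mclass C f) = \<alpha> (mclass C (Idm C (Dom C f))) * \<beta> (mclass C f) +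
    (\<Sum>D\<in>noniso_fst (mclass C f). \<alpha> (mclass C (rep D ! 0)) * \<beta> (mclass C (rep D ! 1)))"
proof -
  let ?p = "[Idm C (Dom C f), f]"
  have e: "Dbar C 2 (mclass C f) = insert (dclass C ?p) (noniso_fst (mclass C f))"
    and n: "dclass C ?p \<notin> noniso_fst (mclass C f)"
    using Dbar2_iso_fst[OF f] unfolding noniso_fst_def by blast+
  have fin: "finite (noniso_fst (mclass C f))" using finite_Dbar2[OF f] unfolding noniso_fst_def by simp
  have "composable C ?p" using unit_decomps(1)[OF f] unfolding decomps_def by simp
  then show ?thesis
    unfolding conv_eq_sum e sum.insert[OF fin n] using rep_dclass_nth_mclass[of ?p] by simp
qed

lemma conv_split_snd:
  assumes f: "f \<in> Mor C"
  shows "conv C \<alpha> \<beta> (mclass C f) = \<alpha> (mclass C f) * \<beta> (mclass C (Idm C (Cod C f))) +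
    (\<Sum>D\<in>noniso_snd (mclass C f). \<alpha> (mclass C (rep D ! 0)) * \<beta> (mclass C (rep D ! 1)))"
proof -
  let ?p = "[f, Idm C (Cod C f)]"
  have e: "Dbar C 2 (mclass C f) = insert (dclass C ?p) (noniso_snd (mclass C f))"
    and n: "dclass C ?p \<notin> noniso_snd (mclass C f)"
    using Dbar2_iso_snd[OF f] unfolding noniso_snd_def by blast+
  have fin: "finite (noniso_snd (mclass C f))" using finite_Dbar2[OF f] unfolding noniso_snd_def by simp
  have "composable C ?p" using unit_decomps(2)[OF f] unfolding decomps_def by simp
  then show ?thesis
    unfolding conv_eq_sum e sum.insert[OF fin n] using rep_dclass_nth_mclass[of ?p] by simp
qed

definition delta where "delta c = (if \<exists>g\<in>c. iso C g then 1 else 0)"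

lemma delta_mclass:
  assumes "f \<in> Mor C" shows "delta (mclass C f) = (if iso C f then 1 else 0)"
proof -
  have "(\<exists>g\<in>mclass C f. iso C g) \<longleftrightarrow> iso C f"
  proof
    assume "\<exists>g\<in>mclass C f. iso C g"
    then obtain g where "mor_iso C f g" "iso C g" unfolding mclass_def by blast
    then show "iso C f" using mor_iso_iso_iff by blast
  qed (use mor_iso_refl[OF assms] in \<open>auto simp: mclass_def\<close>)
  then show ?thesis unfolding delta_def by simp
qed

lemma conv_delta_left:
  assumes f: "f \<in> Mor C" shows "conv C delta \<alpha> (mclass C f) = \<alpha> (mclass C f)"
proof -
  have "delta (mclass C (rep D ! 0)) * \<alpha> (mclass C (rep D ! 1)) = 0"
    if "D \<in> noniso_fst (mclass C f)" for D
    using that Dbar2_rep(4)[OF f] unfolding noniso_fst_def by (simp add: delta_mclass)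
  then show ?thesis
    using conv_split_fst[OF f, of delta \<alpha>] iso_Idm Dom_in_Ob f by (simp add: delta_mclass)
qed

lemma conv_delta_right:
  assumes f: "f \<in> Mor C" shows "conv C \<alpha> delta (mclass C f) = \<alpha> (mclass C f)"
proof -
  have "\<alpha> (mclass C (rep D ! 0)) * delta (mclass C (rep D ! 1)) = 0"
    if "D \<in> noniso_snd (mclass C f)" for D
    using that Dbar2_rep(5)[OF f] unfolding noniso_snd_def by (simp add: delta_mclass)
  then show ?thesis
    using conv_split_snd[OF f, of \<alpha> delta] iso_Idm Cod_in_Ob f by (simp add: delta_mclass)
qed

lemma conv_identity_delta: "conv_identity C delta"
  unfolding conv_identity_def Cbar1_def using conv_delta_left conv_delta_right by auto

lemma conv_identity_unique:
  assumes "conv_identity C e" "c \<in> Cbar1 C" shows "e c = delta c"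
proof -
  obtain f where f: "f \<in> Mor C" "c = mclass C f" using Cbar1_obtain[OF assms(2)] by blast
  have "conv C e delta c = e c" using conv_delta_right f by simp
  moreover have "conv C e delta c = delta c" using assms unfolding conv_identity_def by blast
  ultimately show ?thesis by simp
qed

lemma conv_cong:
  assumes "\<forall>c\<in>Cbar1 C. \<alpha> c = \<alpha>' c" "\<forall>c\<in>Cbar1 C. \<beta> c = \<beta>' c"
    "f \<in> Mor C"
  shows "conv C \<alpha> \<beta> (mclass C f) = conv C \<alpha>' \<beta>' (mclass C f)"
  unfolding conv_eq_sum using assms Dbar2_rep[OF assms(3)] by (intro sum.cong) auto

lemma sum_Dbar_1:
  assumes "g \<in> Mor C"
  shows "(\<Sum>E\<in>Dbar C 1 (mclass C g). h (map (mclass C) (rep E))) = h [mclass C g]"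
  using Dbar_1[OF assms] map_mclass_rep_dclass[of "[g]"] assms by simp

lemma map_mclass_rep_Dbar2:
  assumes "g \<in> Mor C" "E \<in> Dbar C 2 (mclass C g)"
  shows "map (mclass C) (rep E) = [mclass C (rep E ! 0), mclass C (rep E ! 1)]"
proof -
  have "length (rep E) = 2" using Dbar2_rep[OF assms] by simp
  then obtain a b where "rep E = [a, b]" by (auto simp: numeral_2_eq_2 length_Suc_conv)
  then show ?thesis by simp
qed

lemma sum_Dbar3_split_fst:
  assumes f: "f \<in> Mor C"
  shows "(\<Sum>T\<in>Dbar C 3 (mclass C f). h (map (mclass C) (rep T)))
       = (\<Sum>D\<in>Dbar C 2 (mclass C f). \<Sum>E\<in>Dbar C 2 (mclass C (rep D ! 0)).
            h [mclass C (rep E ! 0), mclass C (rep E ! 1), mclass C (rep D ! 1)])"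
proof -
  let ?c = "mclass C f"
  have "(\<Sum>T\<in>Dbar C (2 + 1) ?c. h (map (mclass C) (rep T)))
      = (\<Sum>D\<in>Dbar C 2 ?c. \<Sum>E\<in>Dbar C 2 (mclass C (rep D ! 0)).
            \<Sum>E'\<in>Dbar C 1 (mclass C (rep D ! 1)). h (map (mclass C) (rep E) @ map (mclass C) (rep E')))"
    using sum_Dbar_split[OF mclass_in_Cbar1[OF f], of 2 1 h] finite_Dbar2[OF f]
      finite_Dbar2[OF Dbar2_rep(4)[OF f]] Dbar_1[OF Dbar2_rep(5)[OF f]] by simp
  also have "\<dots> = (\<Sum>D\<in>Dbar C 2 ?c. \<Sum>E\<in>Dbar C 2 (mclass C (rep D ! 0)).
            h [mclass C (rep E ! 0), mclass C (rep E ! 1), mclass C (rep D ! 1)])"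
    using sum_Dbar_1[OF Dbar2_rep(5)[OF f]] map_mclass_rep_Dbar2[OF Dbar2_rep(4)[OF f]]
    by (intro sum.cong refl) simp
  finally show ?thesis by (simp add: numeral_3_eq_3)
qed

lemma sum_Dbar3_split_snd:
  assumes f: "f \<in> Mor C"
  shows "(\<Sum>T\<in>Dbar C 3 (mclass C f). h (map (mclass C) (rep T)))
       = (\<Sum>D\<in>Dbar C 2 (mclass C f). \<Sum>E\<in>Dbar C 2 (mclass C (rep D ! 1)).
            h [mclass C (rep D ! 0), mclass C (rep E ! 0), mclass C (rep E ! 1)])"
proof -
  let ?c = "mclass C f"
  have "(\<Sum>T\<in>Dbar C (1 + 2) ?c. h (map (mclass C) (rep T)))
      = (\<Sum>D\<in>Dbar C 2 ?c. \<Sum>E'\<in>Dbar C 1 (mclass C (rep D ! 0)).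
            \<Sum>E\<in>Dbar C 2 (mclass C (rep D ! 1)). h (map (mclass C) (rep E') @ map (mclass C) (rep E)))"
    using sum_Dbar_split[OF mclass_in_Cbar1[OF f], of 1 2 h] finite_Dbar2[OF f]
      finite_Dbar2[OF Dbar2_rep(5)[OF f]] Dbar_1[OF Dbar2_rep(4)[OF f]] by simp
  also have "\<dots> = (\<Sum>D\<in>Dbar C 2 ?c. \<Sum>E\<in>Dbar C 2 (mclass C (rep D ! 1)).
            h [mclass C (rep D ! 0), mclass C (rep E ! 0), mclass C (rep E ! 1)])"
  proof (rule sum.cong[OF refl])
    fix D assume D: "D \<in> Dbar C 2 ?c"
    show "(\<Sum>E'\<in>Dbar C 1 (mclass C (rep D ! 0)). \<Sum>E\<in>Dbar C 2 (mclass C (rep D ! 1)).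
            h (map (mclass C) (rep E') @ map (mclass C) (rep E)))
        = (\<Sum>E\<in>Dbar C 2 (mclass C (rep D ! 1)).
            h [mclass C (rep D ! 0), mclass C (rep E ! 0), mclass C (rep E ! 1)])"
      using Dbar_1[OF Dbar2_rep(4)[OF f D]] map_mclass_rep_dclass[of "[rep D ! 0]"]
        Dbar2_rep(4)[OF f D] map_mclass_rep_Dbar2[OF Dbar2_rep(5)[OF f D]] by simp
  qed
  finally show ?thesis by (simp add: numeral_3_eq_3)
qed

lemma conv_assoc:
  assumes f: "f \<in> Mor C"
  shows "conv C (conv C \<alpha> \<beta>) \<gamma> (mclass C f) =
    conv C \<alpha> (conv C \<beta> \<gamma>) (mclass C f)"
proof -
  let ?h = "\<lambda>w. \<alpha> (w ! 0) * \<beta> (w ! 1) * \<gamma> (w ! 2)"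
  have "conv C (conv C \<alpha> \<beta>) \<gamma> (mclass C f)
      = (\<Sum>D\<in>Dbar C 2 (mclass C f). \<Sum>E\<in>Dbar C 2 (mclass C (rep D ! 0)).
            \<alpha> (mclass C (rep E ! 0)) * \<beta> (mclass C (rep E ! 1)) * \<gamma> (mclass C (rep D ! 1)))"
    unfolding conv_eq_sum by (simp add: sum_distrib_right)
  also have "\<dots> = (\<Sum>T\<in>Dbar C 3 (mclass C f). ?h (map (mclass C) (rep T)))"
    using sum_Dbar3_split_fst[OF f, of ?h] by simp
  also have "\<dots> = (\<Sum>D\<in>Dbar C 2 (mclass C f). \<Sum>E\<in>Dbar C 2 (mclass C (rep D ! 1)).
            \<alpha> (mclass C (rep D ! 0)) * \<beta> (mclass C (rep E ! 0)) * \<gamma> (mclass C (rep E ! 1)))"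
    using sum_Dbar3_split_snd[OF f, of ?h] by simp
  also have "\<dots> = conv C \<alpha> (conv C \<beta> \<gamma>) (mclass C f)"
    unfolding conv_eq_sum by (simp add: sum_distrib_left mult.assoc)
  finally show ?thesis .
qed

lemma proper_iff_split:
  assumes c: "c \<in> Cbar1 C" and kl: "1 \<le> k" "1 \<le> l" and T: "T \<in> Dbar C (k + l) c"
    and sp: "split_map k T = (D, E, E')"
  shows "T \<in> proper_dclasses (k + l) c \<longleftrightarrow>
    E \<in> proper_dclasses k (mclass C (rep D ! 0)) \<and> E' \<in> proper_dclasses l (mclass C (rep D ! 1))"
proof -
  have "(D, E, E') \<in> split_triples k l c" using split_into[OF c kl T] sp by simp
  then have D: "D \<in> Dbar C 2 c" and E: "E \<in> Dbar C k (mclass C (rep D ! 0))"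
    and E': "E' \<in> Dbar C l (mclass C (rep D ! 1))"
    unfolding split_triples_def by auto
  have "composable C (rep D)" "length (rep D) = 2" using Dbar_rep[OF c D] by auto
  then have cc: "mclass C (rep D ! 0) \<in> Cbar1 C" "mclass C (rep D ! 1) \<in> Cbar1 C"
    using composable_mor mclass_in_Cbar1 by auto
  let ?t = "rep T"
  have t: "composable C ?t" "length ?t = k + l" using Dbar_rep[OF c T] kl by auto
  note d = take_drop_split[OF t kl]
  have e: "E = dclass C (take k ?t)" "E' = dclass C (drop k ?t)" using sp unfolding split_map_def by auto
  have i: "dec_iso C (take k ?t) (rep E)" "dec_iso C (drop k ?t) (rep E')"
    using rep_dclass[OF d(3,1)] rep_dclass[OF d(4,2)] e by simp_all
  have noniso: "(\<forall>i<n. \<not> iso C (xs ! i)) \<longleftrightarrow>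
    (\<forall>x\<in>set xs. \<not> iso C x)"
    if "length xs = n" for xs n
    using that by (auto simp: all_set_conv_all_nth)
  have "E \<in> proper_dclasses k (mclass C (rep D ! 0)) \<longleftrightarrow>
    (\<forall>i<k. \<not> iso C (rep E ! i))"
    using mem_proper_dclasses_iff[OF cc(1) kl(1) E] .
  also have "\<dots> \<longleftrightarrow> (\<forall>i<k. \<not> iso C (take k ?t ! i))"
    using dec_iso_nth_iso[OF i(1)] d(5) by auto
  also have "\<dots> \<longleftrightarrow> (\<forall>x\<in>set (take k ?t). \<not> iso C x)"
    using noniso[OF d(5)] .
  finally have 1: "E \<in> proper_dclasses k (mclass C (rep D ! 0)) \<longleftrightarrow>
    (\<forall>x\<in>set (take k ?t). \<not> iso C x)" .
  have "E' \<in> proper_dclasses l (mclass C (rep D ! 1)) \<longleftrightarrow>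
    (\<forall>i<l. \<not> iso C (rep E' ! i))"
    using mem_proper_dclasses_iff[OF cc(2) kl(2) E'] .
  also have "\<dots> \<longleftrightarrow> (\<forall>i<l. \<not> iso C (drop k ?t ! i))"
    using dec_iso_nth_iso[OF i(2)] d(6) by auto
  also have "\<dots> \<longleftrightarrow> (\<forall>x\<in>set (drop k ?t). \<not> iso C x)"
    using noniso[OF d(6)] .
  finally have 2: "E' \<in> proper_dclasses l (mclass C (rep D ! 1)) \<longleftrightarrow>
    (\<forall>x\<in>set (drop k ?t). \<not> iso C x)" .
  have 3: "T \<in> proper_dclasses (k + l) c \<longleftrightarrow> (\<forall>x\<in>set ?t. \<not> iso C x)"
    using mem_proper_dclasses_iff[OF c _ T] kl noniso[OF t(2)] by simp
  have "set ?t = set (take k ?t) \<union> set (drop k ?t)"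
    by (metis append_take_drop_id set_append)
  then show ?thesis using 1 2 3 by blast
qed

definition rank where "rank c = Max (insert 0 {n. 1 \<le> n \<and> proper_dclasses n c \<noteq> {}})"

lemma rank_ge: assumes "c \<in> Cbar1 C" "1 \<le> n" "proper_dclasses n c \<noteq> {}" shows "n \<le> rank c"
  unfolding rank_def using finite_proper_lengths[OF assms(1)] assms by (intro Max_ge) auto

lemma proper_dclasses_rank:
  assumes "c \<in> Cbar1 C" "1 \<le> rank c" shows "proper_dclasses (rank c) c \<noteq> {}"
proof -
  have "rank c \<in> insert 0 {n. 1 \<le> n \<and> proper_dclasses n c \<noteq> {}}"
    unfolding rank_def using finite_proper_lengths[OF assms(1)] by (intro Max_in) auto
  then show ?thesis using assms(2) by auto
qed

lemma rank_pos: assumes "f \<in> Mor C" "\<not> iso C f" shows "1 \<le> rank (mclass C f)"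
  using rank_ge[OF mclass_in_Cbar1[OF assms(1)], of 1] proper_dclasses_1[OF assms] by simp

text \<open>Prepending the non-invertible first factor to a longest proper decomposition of the
  second factor gives a longer proper decomposition of the whole morphism.\<close>
lemma rank_snd_less:
  assumes f: "f \<in> Mor C" and D: "D \<in> noniso_fst (mclass C f)"
  shows "rank (mclass C (rep D ! 1)) < rank (mclass C f)"
proof -
  let ?c = "mclass C f" and ?m = "rank (mclass C (rep D ! 1))"
  have c: "?c \<in> Cbar1 C" using mclass_in_Cbar1[OF f] .
  have D2: "D \<in> Dbar C 2 ?c" "\<not> iso C (rep D ! 0)" using D unfolding noniso_fst_def by auto
  note r = Dbar2_rep[OF f D2(1)]
  have nf: "\<not> iso C f" using noniso_fst_iso[of f] D by auto
  show ?thesis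
  proof (cases "?m = 0")
    case True then show ?thesis using rank_pos[OF f nf] by simp
  next
    case False
    then obtain E where E: "E \<in> proper_dclasses ?m (mclass C (rep D ! 1))"
      using proper_dclasses_rank[OF r(7)] by auto
    have "(D, dclass C [rep D ! 0], E) \<in> split_triples 1 ?m ?c"
      unfolding split_triples_def using D2 E proper_dclasses_subset Dbar_1[OF r(4)] by auto
    then obtain T where T: "T \<in> Dbar C (1 + ?m) ?c" "split_map 1 T = (D, dclass C [rep D ! 0], E)"
      using split_onto[OF c, of 1 ?m] False by fastforce
    have "T \<in> proper_dclasses (1 + ?m) ?c"
      using proper_iff_split[OF c _ _ T] False E proper_dclasses_1[OF r(4) D2(2)] by simp
    then show ?thesis using rank_ge[OF c] by fastforce
  qed
qed

definition dom_weight where "dom_weight \<alpha> c = \<alpha> (mclass C (Idm C (Dom C (SOME g. g \<in> c))))"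

lemma dom_weight_mclass:
  assumes "f \<in> Mor C" shows "dom_weight \<alpha> (mclass C f) = \<alpha> (mclass C (Idm C (Dom C f)))"
proof -
  have "f \<in> mclass C f" using mor_iso_refl[OF assms] mem_mclass_iff by simp
  then have "mor_iso C f (SOME g. g \<in> mclass C f)" using someI mem_mclass_iff by metis
  then show ?thesis unfolding dom_weight_def using iso_obj_Dom mclass_Idm_eq by metis
qed

text \<open>The defining equation of a right inverse, solved for its value at the class c, refers
  only to classes of smaller rank; k approximation steps compute it on classes of rank below k.\<close>
primrec right_inv_approx where
  "right_inv_approx \<alpha> 0 c = 0"
| "right_inv_approx \<alpha> (Suc k) c = unit_inv (dom_weight \<alpha> c) *
     (delta c - (\<Sum>D\<in>noniso_fst c. \<alpha> (mclass C (rep D ! 0)) * right_inv_approx \<alpha> k (mclass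
       C (rep D ! 1))))"

lemma right_inv_approx_stable:
  "c \<in> Cbar1 C \<Longrightarrow> rank c < k \<Longrightarrow>
    right_inv_approx \<alpha> k c = right_inv_approx \<alpha> (Suc (rank c)) c"
proof (induction k arbitrary: c rule: less_induct)
  case (less k c)
  obtain k' where k: "k = Suc k'" using less.prems by (cases k) auto
  obtain f where f: "f \<in> Mor C" "c = mclass C f" using Cbar1_obtain[OF less.prems(1)] by blast
  have "right_inv_approx \<alpha> k' (mclass C (rep D ! 1)) =
    right_inv_approx \<alpha> (rank c) (mclass C (rep D ! 1))"
    if D: "D \<in> noniso_fst c" for D
  proof -
    have c1: "mclass C (rep D ! 1) \<in> Cbar1 C"
      using Dbar2_rep(7)[OF f(1)] D f unfolding noniso_fst_def by simp
    have "rank (mclass C (rep D ! 1)) < rank c" using rank_snd_less[OF f(1)] D f by simp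
    then show ?thesis
      using less.IH[OF _ c1, of k'] less.IH[OF _ c1, of "rank c"] k less.prems(2) by simp
  qed
  then show ?case using k by simp
qed

definition right_inv where "right_inv \<alpha> c = right_inv_approx \<alpha> (Suc (rank c)) c"

lemma right_inv_mclass:
  assumes f: "f \<in> Mor C"
  shows "right_inv \<alpha> (mclass C f) = unit_inv (\<alpha> (mclass C (Idm C (Dom C f)))) *
     (delta (mclass C f) - (\<Sum>D\<in>noniso_fst (mclass C f). \<alpha> (mclass C (rep D ! 0)) * right_inv
       \<alpha> (mclass C (rep D ! 1))))"
proof -
  let ?c = "mclass C f"
  have "right_inv_approx \<alpha> (rank ?c) (mclass C (rep D ! 1)) = right_inv \<alpha> (mclass C (rep D ! 1))"
    if D: "D \<in> noniso_fst ?c" for D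
    using right_inv_approx_stable[of "mclass C (rep D ! 1)" "rank ?c" \<alpha>] rank_snd_less[OF f D]
      Dbar2_rep(7)[OF f] D unfolding right_inv_def noniso_fst_def by simp
  then show ?thesis unfolding right_inv_def[of \<alpha> ?c] using dom_weight_mclass[OF f, of \<alpha>] by simp
qed

lemma conv_right_inv:
  assumes u: "\<forall>x\<in>Ob C. \<alpha> (mclass C (Idm C x)) dvd 1" and c: "c \<in> Cbar1 C"
  shows "conv C \<alpha> (right_inv \<alpha>) c = delta c"
proof -
  obtain f where f: "f \<in> Mor C" "c = mclass C f" using Cbar1_obtain[OF c] by blast
  let ?u = "\<alpha> (mclass C (Idm C (Dom C f)))"
  let ?S = "\<Sum>D\<in>noniso_fst c. \<alpha> (mclass C (rep D ! 0)) * right_inv \<alpha> (mclass C (rep D ! 1))"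
  have "?u * unit_inv ?u = 1" using mult_unit_inv u Dom_in_Ob f by blast
  moreover have "conv C \<alpha> (right_inv \<alpha>) c = ?u * (unit_inv ?u * (delta c - ?S)) + ?S"
    using conv_split_fst[OF f(1), of \<alpha> "right_inv \<alpha>"] right_inv_mclass[OF f(1), of \<alpha>] f
      by simp
  ultimately show ?thesis by (simp add: mult.assoc[symmetric])
qed

lemma units_of_conv_right_inverse:
  assumes inv: "\<forall>c\<in>Cbar1 C. conv C \<alpha> \<beta> c = delta c" and x: "x \<in> Ob C"
  shows "\<alpha> (mclass C (Idm C x)) dvd 1" "\<beta> (mclass C (Idm C x)) dvd 1"
proof -
  have i: "Idm C x \<in> Mor C" "iso C (Idm C x)" using x iso_Idm by auto
  have "\<alpha> (mclass C (Idm C x)) * \<beta> (mclass C (Idm C x)) = 1"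
    using conv_split_fst[OF i(1), of \<alpha> \<beta>] noniso_fst_iso[OF i(2)] inv mclass_in_Cbar1[OF i(1)] i x
    by (simp add: delta_mclass)
  then show "\<alpha> (mclass C (Idm C x)) dvd 1" "\<beta> (mclass C (Idm C x)) dvd 1"
    by (metis dvd_triv_left dvd_triv_right)+
qed

text \<open>A right inverse of a right inverse is the original map, by associativity.\<close>
lemma conv_inverse_right_inv:
  assumes u: "\<forall>x\<in>Ob C. \<alpha> (mclass C (Idm C x)) dvd 1"
  shows "conv_inverse C \<alpha> (right_inv \<alpha>)"
proof -
  let ?\<beta> = "right_inv \<alpha>"
  let ?\<gamma> = "right_inv ?\<beta>"
  have \<alpha>\<beta>: "\<forall>c\<in>Cbar1 C. conv C \<alpha> ?\<beta> c = delta c"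
    using conv_right_inv[OF u] by blast
  have "\<forall>x\<in>Ob C. ?\<beta> (mclass C (Idm C x)) dvd 1"
    using units_of_conv_right_inverse(2)[OF \<alpha>\<beta>] by blast
  then have \<beta>\<gamma>: "\<forall>c\<in>Cbar1 C. conv C ?\<beta> ?\<gamma> c = delta c"
    using conv_right_inv by blast
  have \<gamma>\<alpha>: "\<forall>c\<in>Cbar1 C. ?\<gamma> c = \<alpha> c"
  proof
    fix c assume "c \<in> Cbar1 C"
    then obtain f where f: "f \<in> Mor C" "c = mclass C f" using Cbar1_obtain by blast
    have "?\<gamma> c = conv C delta ?\<gamma> c" using conv_delta_left[OF f(1), of ?\<gamma>] f by simp
    also have "\<dots> = conv C (conv C \<alpha> ?\<beta>) ?\<gamma> c"
      using conv_cong[OF _ _ f(1), of delta "conv C \<alpha> ?\<beta>" ?\<gamma> ?\<gamma>] \<alpha>\<beta> f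
        by simp
    also have "\<dots> = conv C \<alpha> (conv C ?\<beta> ?\<gamma>) c" using conv_assoc[OF f(1)] f by simp
    also have "\<dots> = conv C \<alpha> delta c"
      using conv_cong[OF _ _ f(1), of \<alpha> \<alpha> "conv C ?\<beta> ?\<gamma>" delta] \<beta>\<gamma> f
        by simp
    also have "\<dots> = \<alpha> c" using conv_delta_right[OF f(1), of \<alpha>] f by simp
    finally show "?\<gamma> c = \<alpha> c" .
  qed
  have "\<forall>c\<in>Cbar1 C. conv C ?\<beta> \<alpha> c = delta c"
    using \<beta>\<gamma> \<gamma>\<alpha> conv_cong[of ?\<beta> ?\<beta> ?\<gamma> \<alpha>] Cbar1_obtain
      by metis
  then show ?thesis unfolding conv_inverse_def using \<alpha>\<beta> conv_identity_delta by blast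
qed

lemma conv_invertible_iff:
  "conv_invertible C \<alpha> \<longleftrightarrow> (\<forall>x\<in>Ob C. \<alpha> (mclass C (Idm C x)) dvd 1)"
proof
  assume "conv_invertible C \<alpha>"
  then obtain \<beta> e where e: "conv_identity C e" "\<forall>c\<in>Cbar1 C. conv C \<alpha> \<beta> c = e c"
    unfolding conv_invertible_def conv_inverse_def by blast
  then have "\<forall>c\<in>Cbar1 C. conv C \<alpha> \<beta> c = delta c"
    using conv_identity_unique[OF e(1)] by simp
  then show "\<forall>x\<in>Ob C. \<alpha> (mclass C (Idm C x)) dvd 1"
    using units_of_conv_right_inverse(1) by blast
qed (use conv_inverse_right_inv in \<open>auto simp: conv_invertible_def\<close>)

lemma split_map_proper_dclasses:
  assumes f: "f \<in> Mor C" and n: "1 \<le> n"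
  shows "split_map 1 ` proper_dclasses (1 + n) (mclass C f) =
    (SIGMA D:noniso_fst (mclass C f). proper_dclasses 1 (mclass C (rep D ! 0)) \<times> proper_dclasses n
      (mclass C (rep D ! 1)))"
    (is "_ = ?Q")
proof
  let ?c = "mclass C f"
  have c: "?c \<in> Cbar1 C" using mclass_in_Cbar1[OF f] .
  show "split_map 1 ` proper_dclasses (1 + n) ?c \<subseteq> ?Q"
  proof
    fix X assume "X \<in> split_map 1 ` proper_dclasses (1 + n) ?c"
    then obtain T where T: "T \<in> proper_dclasses (1 + n) ?c" "X = split_map 1 T" by blast
    have T': "T \<in> Dbar C (1 + n) ?c" using T proper_dclasses_subset by blast
    obtain D E E' where X: "split_map 1 T = (D, E, E')" by (cases "split_map 1 T") auto
    have D: "D \<in> Dbar C 2 ?c" using split_into[OF c _ n T'] X unfolding split_triples_def by auto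
    have P: "E \<in> proper_dclasses 1 (mclass C (rep D ! 0))"
      "E' \<in> proper_dclasses n (mclass C (rep D ! 1))"
      using proper_iff_split[OF c _ n T' X] T by auto
    then have "\<not> iso C (rep D ! 0)" using proper_dclasses_iso[of "rep D ! 0" 1] by auto
    then show "X \<in> ?Q" using T X P D unfolding noniso_fst_def by simp
  qed
  show "?Q \<subseteq> split_map 1 ` proper_dclasses (1 + n) ?c"
  proof
    fix X assume X: "X \<in> ?Q"
    then obtain D E E' where X': "X = (D, E, E')" "D \<in> noniso_fst ?c"
      "E \<in> proper_dclasses 1 (mclass C (rep D ! 0))" "E' \<in> proper_dclasses n (mclass C (rep D ! 1))"
      by auto
    have "X \<in> split_triples 1 n ?c"
      using X' proper_dclasses_subset unfolding split_triples_def noniso_fst_def by blast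
    then obtain T where T: "T \<in> Dbar C (1 + n) ?c" "split_map 1 T = (D, E, E')"
      using split_onto[OF c _ n] X'(1) by force
    then have "T \<in> proper_dclasses (1 + n) ?c" using proper_iff_split[OF c _ n T] X' by simp
    then show "X \<in> split_map 1 ` proper_dclasses (1 + n) ?c" using T(2) X'(1) by force
  qed
qed

lemma card_proper_dclasses_Suc:
  assumes f: "f \<in> Mor C" and n: "1 \<le> n"
  shows "card (proper_dclasses (1 + n) (mclass C f)) =
    (\<Sum>D\<in>noniso_fst (mclass C f). card (proper_dclasses n (mclass C (rep D ! 1))))"
proof -
  let ?c = "mclass C f"
  have c: "?c \<in> Cbar1 C" using mclass_in_Cbar1[OF f] .
  have "inj_on (split_map 1) (proper_dclasses (1 + n) ?c)"
    using inj_on_subset[OF split_inj[OF c _ n, of 1] proper_dclasses_subset] by simp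
  then have "card (proper_dclasses (1 + n) ?c) = card (split_map 1 ` proper_dclasses (1 + n) ?c)"
    by (rule card_image[symmetric])
  also have "\<dots> = (\<Sum>D\<in>noniso_fst ?c. card (proper_dclasses 1 (mclass C (rep D ! 0)) \<times>
      proper_dclasses n (mclass C (rep D ! 1))))"
    unfolding split_map_proper_dclasses[OF f n]
  proof (rule card_SigmaI)
    show "finite (noniso_fst ?c)" using finite_Dbar2[OF f] unfolding noniso_fst_def by simp
    show "\<forall>D\<in>noniso_fst ?c. finite (proper_dclasses 1 (mclass C (rep D ! 0)) \<times> proper_dclasses n (mclass C (rep D ! 1)))"
      using Dbar2_rep(6,7)[OF f] finite_proper_dclasses n unfolding noniso_fst_def by simp
  qed
  also have "\<dots> = (\<Sum>D\<in>noniso_fst ?c. card (proper_dclasses n (mclass C (rep D ! 1))))"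
  proof (rule sum.cong[OF refl])
    fix D assume "D \<in> noniso_fst ?c"
    then have "proper_dclasses 1 (mclass C (rep D ! 0)) = {dclass C [rep D ! 0]}"
      using proper_dclasses_1 Dbar2_rep(4)[OF f] unfolding noniso_fst_def by simp
    then show "card (proper_dclasses 1 (mclass C (rep D ! 0)) \<times> proper_dclasses n (mclass C (rep D ! 1)))
        = card (proper_dclasses n (mclass C (rep D ! 1)))"
      by (simp add: card_cartesian_product)
  qed
  finally show ?thesis .
qed

definition mobius_sum where
  "mobius_sum c N = (\<Sum>n\<in>{1..N}. (-1) ^ n * of_nat (card (proper_dclasses n c)) :: 'r::comm_ring_1)"

lemma mobius_sum_iso: "iso C f \<Longrightarrow> mobius_sum (mclass C f) N = 0"
  unfolding mobius_sum_def using proper_dclasses_iso by simp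

lemma mobius_sum_stable:
  assumes c: "c \<in> Cbar1 C" and N: "rank c \<le> N" shows "mobius_sum c N = mobius_sum c (rank c)"
  unfolding mobius_sum_def
proof (rule sum.mono_neutral_right)
  show "\<forall>i\<in>{1..N} - {1..rank c}. (-1) ^ i * of_nat (card (proper_dclasses i c)) = 0"
  proof
    fix i assume "i \<in> {1..N} - {1..rank c}"
    then have "proper_dclasses i c = {}" using rank_ge[OF c, of i] by auto
    then show "(-1) ^ i * of_nat (card (proper_dclasses i c)) = 0" by simp
  qed
qed (use N in auto)

lemma sum_noniso_fst_mobius_sum:
  assumes f: "f \<in> Mor C" "\<not> iso C f"
  shows "(\<Sum>D\<in>noniso_fst (mclass C f). mobius_sum (mclass C (rep D ! 1)) N) =
    - (1 + mobius_sum (mclass C f) (Suc N) :: 'r::comm_ring_1)"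
proof -
  let ?c = "mclass C f"
  let ?P = "\<lambda>n. (-1) ^ n * of_nat (card (proper_dclasses (Suc n) ?c)) :: 'r"
  have "(\<Sum>D\<in>noniso_fst ?c. mobius_sum (mclass C (rep D ! 1)) N)
      = (\<Sum>n\<in>{1..N}. \<Sum>D\<in>noniso_fst ?c.
            (-1) ^ n * of_nat (card (proper_dclasses n (mclass C (rep D ! 1)))))"
    unfolding mobius_sum_def by (rule sum.swap)
  also have "\<dots> = (\<Sum>n\<in>{1..N}. ?P n)"
  proof (rule sum.cong[OF refl])
    fix n assume "n \<in> {1..N}"
    then show "(\<Sum>D\<in>noniso_fst ?c. (-1) ^ n * of_nat (card (proper_dclasses n (mclass C (rep D ! 1))))) = ?P n"
      using card_proper_dclasses_Suc[OF f(1), of n] by (simp add: sum_distrib_left)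
  qed
  finally have "(\<Sum>D\<in>noniso_fst ?c. mobius_sum (mclass C (rep D ! 1)) N) = (\<Sum>n\<in>{1..N}. ?P n)" .
  moreover have "mobius_sum ?c (Suc N) = - 1 - (\<Sum>n\<in>{1..N}. ?P n)"
  proof -
    have "mobius_sum ?c (Suc N) =
      (\<Sum>n\<in>{0..N}. (-1) ^ Suc n * of_nat (card (proper_dclasses (Suc n) ?c)))"
      unfolding mobius_sum_def by (subst sum.shift_bounds_cl_Suc_ivl[symmetric]) simp
    also have "\<dots> = - 1 + (\<Sum>n\<in>{1..N}. (-1) ^ Suc n * of_nat (card (proper_dclasses (Suc n) ?c)))"
      using proper_dclasses_1[OF f] by (simp add: sum.atLeast_Suc_atMost del: power_Suc)
    also have "\<dots> = - 1 - (\<Sum>n\<in>{1..N}. ?P n)"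
      by (simp add: sum_negf)
    finally show ?thesis .
  qed
  ultimately show ?thesis by simp
qed

lemma sum_noniso_fst_iso_snd:
  assumes f: "f \<in> Mor C" "\<not> iso C f"
  shows "(\<Sum>D\<in>noniso_fst (mclass C f). if iso C (rep D ! 1) then 1 else 0) = 1"
proof -
  let ?p = "[f, Idm C (Cod C f)]"
  have "\<not> iso C (rep (dclass C ?p) ! 0)"
    using rep_dclass_nth_mclass[of ?p 0] unit_decomps(2)[OF f(1)] Dbar2_rep(4)[OF f(1)]
      Dbar2_iso_snd[OF f(1)] f mclass_eq_iff mor_iso_iso_iff unfolding decomps_def by fastforce
  then have "{D \<in> noniso_fst (mclass C f). iso C (rep D ! 1)} = {dclass C ?p}"
    using Dbar2_iso_snd[OF f(1)] unfolding noniso_fst_def by blast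
  moreover have "finite (noniso_fst (mclass C f))" using finite_Dbar2[OF f(1)] unfolding noniso_fst_def by simp
  ultimately show ?thesis by (simp add: sum.inter_filter[symmetric])
qed

lemma mobius_iso:
  assumes hyp: "\<forall>c\<in>Cbar1 C. conv C (\<lambda>_. 1) \<mu> c = delta c" and f: "f \<in> Mor C"
    "iso C f"
  shows "\<mu> (mclass C f) = 1"
  using conv_split_fst[OF f(1), of "\<lambda>_. 1" \<mu>] noniso_fst_iso[OF f(2)] hyp mclass_in_Cbar1[OF f(1)] f
  by (simp add: delta_mclass)

lemma mobius_rec:
  assumes hyp: "\<forall>c\<in>Cbar1 C. conv C (\<lambda>_. 1) \<mu> c = delta c" and f: "f \<in> Mor C"
    "\<not> iso C f"
  shows "\<mu> (mclass C f) = - (\<Sum>D\<in>noniso_fst (mclass C f). \<mu> (mclass C (rep D ! 1)))"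
  using conv_split_fst[OF f(1), of "\<lambda>_. 1" \<mu>] hyp mclass_in_Cbar1[OF f(1)] f
  by (simp add: delta_mclass eq_neg_iff_add_eq_0)

lemma mobius_noniso:
  fixes \<mu> :: "_ \<Rightarrow> 'r::comm_ring_1"
  assumes hyp: "\<forall>c\<in>Cbar1 C. conv C (\<lambda>_. 1) \<mu> c = delta c"
  shows "f \<in> Mor C \<Longrightarrow> \<not> iso C f \<Longrightarrow>
    \<mu> (mclass C f) = mobius_sum (mclass C f) (rank (mclass C f))"
proof (induction "rank (mclass C f)" arbitrary: f rule: less_induct)
  case less
  let ?c = "mclass C f"
  obtain N where N: "rank ?c = Suc N" using rank_pos[OF less.prems] by (cases "rank ?c") auto
  have "\<mu> (mclass C (rep D ! 1)) =
    (if iso C (rep D ! 1) then 1 else 0) + mobius_sum (mclass C (rep D ! 1)) N"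
    if D: "D \<in> noniso_fst ?c" for D
  proof -
    have g: "rep D ! 1 \<in> Mor C" "mclass C (rep D ! 1) \<in> Cbar1 C"
      using D Dbar2_rep(5,7)[OF less.prems(1)] unfolding noniso_fst_def by auto
    have lt: "rank (mclass C (rep D ! 1)) < rank ?c" using rank_snd_less[OF less.prems(1) D] .
    show ?thesis
    proof (cases "iso C (rep D ! 1)")
      case True
      then show ?thesis using mobius_iso[OF hyp g(1)] mobius_sum_iso by simp
    next
      case False
      have "mobius_sum (mclass C (rep D ! 1)) N =
        (mobius_sum (mclass C (rep D ! 1)) (rank (mclass C (rep D ! 1))) :: 'r)"
        by (rule mobius_sum_stable[OF g(2)]) (use lt N in simp)
      then show ?thesis using less.hyps[OF lt g(1) False] False by simp
    qed
  qed
  then have "\<mu> ?c =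
    - (\<Sum>D\<in>noniso_fst ?c. (if iso C (rep D ! 1) then 1 else 0) + mobius_sum (mclass C (rep D ! 1)) N)"
    using mobius_rec[OF hyp less.prems] by simp
  also have "\<dots> = mobius_sum ?c (Suc N)"
    unfolding sum.distrib sum_noniso_fst_iso_snd[OF less.prems] sum_noniso_fst_mobius_sum[OF less.prems] by simp
  finally show ?case using N by simp
qed

lemma mobius_sum_rank_eq:
  assumes f: "f \<in> Mor C" "\<not> iso C f"
  shows "mobius_sum (mclass C f) (rank (mclass C f)) =
    (\<Sum>n\<in>{n. 1 \<le> n \<and> PDbar C n (mclass C f) \<noteq> {}}. (-1) ^ n * of_nat (card (PDbar C n
      (mclass C f))) :: 'r::comm_ring_1)"
proof -
  let ?c = "mclass C f"
  have c: "?c \<in> Cbar1 C" using mclass_in_Cbar1[OF f(1)] .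
  have "{n. 1 \<le> n \<and> PDbar C n ?c \<noteq> {}} = {n. 1 \<le> n \<and> proper_dclasses n ?c \<noteq> {}}"
    using PDbar_eq_proper_dclasses[OF f] by auto
  then have "(\<Sum>n\<in>{n. 1 \<le> n \<and>
    PDbar C n ?c \<noteq> {}}. (-1) ^ n * of_nat (card (PDbar C n ?c)) :: 'r) =
      (\<Sum>n\<in>{n. 1 \<le> n \<and> proper_dclasses n ?c \<noteq> {}}. (-1) ^ n * of_nat (card
        (proper_dclasses n ?c)))"
    using PDbar_eq_proper_dclasses[OF f] by (intro sum.cong) auto
  also have "\<dots> = mobius_sum ?c (rank ?c)"
    unfolding mobius_sum_def
  proof (rule sum.mono_neutral_left)
    show "{n. 1 \<le> n \<and> proper_dclasses n ?c \<noteq> {}} \<subseteq> {1..rank ?c}"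
      using rank_ge[OF c] by force
  qed auto
  finally show ?thesis by simp
qed

end

theorem theorem8p3:
  fixes C :: "('o, 'm) cat"
  assumes "category C"
    and "ess_finite_decomp C"
    and "iso_filling C"
    and "rat_algebra TYPE('r::comm_ring_1)"
  shows "(\<forall>\<alpha> :: 'm set \<Rightarrow> 'r. conv_invertible C \<alpha> \<longleftrightarrow>
            (\<forall>x\<in>Ob C. \<alpha> (mclass C (Idm C x)) dvd 1))
       \<and> conv_invertible C (\<lambda>_. 1 :: 'r)
       \<and> (\<forall>\<mu> :: 'm set \<Rightarrow> 'r. conv_inverse C (\<lambda>_. 1) \<mu> \<longrightarrow>
            (\<forall>f\<in>Mor C. \<mu> (mclass C f) =
               (if iso C f then 1
                else (\<Sum>n\<in>{n. 1 \<le> n \<and> PDbar C n (mclass C f) \<noteq> {}}.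
                        (-1) ^ n * of_nat (card (PDbar C n (mclass C f)))))))"
proof -
  interpret efd_category C
    using assms(1-3) by unfold_locales (auto simp: category_ctx_def)
  have invertible: "conv_invertible C \<alpha> \<longleftrightarrow>
    (\<forall>x\<in>Ob C. \<alpha> (mclass C (Idm C x)) dvd 1)"
    for \<alpha> :: "'m set \<Rightarrow> 'r"
    by (rule conv_invertible_iff)
  have mobius: "\<mu> (mclass C f) = (if iso C f then 1
      else \<Sum>n\<in>{n. 1 \<le> n \<and> PDbar C n (mclass C f) \<noteq> {}}.
             (-1) ^ n * of_nat (card (PDbar C n (mclass C f))))"
    if inv: "conv_inverse C (\<lambda>_. 1) \<mu>" and f: "f \<in> Mor C" for \<mu> :: "'m set \<Rightarrow> 'r"
      and f
  proof -
    obtain e where e: "conv_identity C e" "\<forall>c\<in>Cbar1 C. conv C (\<lambda>_. 1) \<mu> c = e c"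
      using inv unfolding conv_inverse_def by blast
    then have "\<forall>c\<in>Cbar1 C. conv C (\<lambda>_. 1) \<mu> c = delta c"
      using conv_identity_unique[OF e(1)] by simp
    then show ?thesis
      using mobius_iso[of \<mu> f] mobius_noniso[of \<mu> f] mobius_sum_rank_eq[OF f, where 'r = 'r] f by simp
  qed
  show ?thesis using invertible mobius by simp
qed

end
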